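(* Consider the portfolio loss $f(x,y)=-x^Ty$ on $\mathcal{X}\times\mathbb{R}^d$ with $\mathcal{X}\subseteq\mathbb{R}^d$, and let $0<\beta<1$. Suppose the support of $Y$ is $\mathcal{Y}=\mathbb{R}^d$ and there exist linearly independent $x_1,x_2\in\mathcal{X}$. Then every $\mathcal{R}\supseteq\mathcal{R}_{\mathcal{X}}$ satisfies the $\beta$-aggregation condition. Moreover, if $Y$ has a continuous distribution and $\mathcal{X}$ is compact, then aggregation sampling with respect to $\mathcal{R}$ is consistent in the following sense: for every $\beta$-tail risk measure $\rho_\beta$, with probability 1, for all $n$ large enough, $\hat{\rho}_{n,\beta}(x)=\tilde{\rho}_{N(n),\beta}(x)$ for all $x\in\mathcal{X}$.
   Context: $F_x(z)=\mathbb{P}(f(x,Y)\le z)$, $F_x^{-1}(\beta)=\inf\{z:F_x(z)\ge\beta\}$, $\mathcal{R}_x=\{y: f(x,y)\ge F_x^{-1}(\beta)\}$, $\mathcal{R}_{\mathcal{X}}=\bigcup_{x\in\mathcal{X}}\mathcal{R}_x$. A set $\mathcal{R}$ with $\mathcal{R}_{\mathcal{X}}\subseteq\mathcal{R}\subset\mathbb{R}^d$ satisfies the $\beta$-aggregation condition if for all $x\in\mathcal{X}$ and $z'<F_x^{-1}(\beta)$, $\mathbb{P}(Y\in\{y:z'<f(x,y)\le F_x^{-1}(\beta)\}\cap\mathcal{R})>0$. For a real random variable $Z$, $F_Z^{-1}(u)=\inf\{z:\mathbb{P}(Z\le z)\ge u\}$; a $\beta$-tail risk measure is a map $\rho_\beta$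 from real random variables to $\mathbb{R}\cup\{\infty\}$ with $\rho_\beta(Z)=\rho_\beta(W)$ whenever $F_Z^{-1}=F_W^{-1}$ on $[\beta,1]$. For the consistency statement (where $\mathbb{E}|Y|<\infty$ and $0<\mathbb{P}(Y\in\mathcal{R}^c)<1$ are implicitly assumed): $Y_1,Y_2,\dots$ are i.i.d. copies of $Y$; $\psi_{\mathcal{R}}(y)=y$ for $y\in\mathcal{R}$ and $\psi_{\mathcal{R}}(y)=\mathbb{E}[Y\mid Y\in\mathcal{R}^c]$ otherwise; $\tilde{\rho}_{m,\beta}(x)$ is $\rho_\beta$ of a random variable uniform on $\{f(x,\psi_{\mathcal{R}}(Y_i))\}_{i=1}^m$; $N(n)$ is the smallest $m$ with $|\{i\le m:Y_i\in\mathcal{R}\}|=n$; for $N(n)>n$, $\bar{y}_n=\frac{1}{N(n)-n}\sum_{i\le N(n):Y_i\in\mathcal{R}^c}Y_i$ and $\hat{\rho}_{n,\beta}(x)$ is $\rho_\beta$ of the discrete random variable taking value $f(x,Y_i)$ with probability $1/N(n)$ for each $i\le N(n)$ with $Y_i\in\mathcal{R}$ and value $f(x,\bar{y}_n)$ with probability $(N(n)-n)/N(n)$. *)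

theory Defs
  imports "HOL-Probability.Probability"
begin

definition loss :: "'a::euclidean_space \<Rightarrow> 'a \<Rightarrow> real" where
  "loss x y = - (x \<bullet> y)"

text \<open>Generalised inverse of the cdf of a law mu on the reals:
  inf {z. mu(-inf,z] >= u}, valued in the extended reals (inf of empty set = +infinity).\<close>
definition quantile :: "real measure \<Rightarrow> real \<Rightarrow> ereal" where
  "quantile \<mu> u = Inf (ereal ` {z. measure \<mu> {..z} \<ge> u})"

definition VaR :: "'w measure \<Rightarrow> ('w \<Rightarrow> 'a::euclidean_space) \<Rightarrow> real \<Rightarrow> 'a \<Rightarrow> ereal" where
  "VaR M Y \<beta> x = quantile (distr M borel (\<lambda>w. loss x (Y w))) \<beta>"

definition riskregion_x :: "'w measure \<Rightarrow> ('w \<Rightarrow> 'a::euclidean_space) \<Rightarrow> real \<Rightarrow> 'a \<Rightarrow> 'a set" where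
  "riskregion_x M Y \<beta> x = {y. ereal (loss x y) \<ge> VaR M Y \<beta> x}"

definition riskregion :: "'w measure \<Rightarrow> ('w \<Rightarrow> 'a::euclidean_space) \<Rightarrow> real \<Rightarrow> 'a set \<Rightarrow> 'a set" where
  "riskregion M Y \<beta> X = (\<Union>x\<in>X. riskregion_x M Y \<beta> x)"

definition aggregation_condition ::
  "'w measure \<Rightarrow> ('w \<Rightarrow> 'a::euclidean_space) \<Rightarrow> real \<Rightarrow> 'a set \<Rightarrow> 'a set \<Rightarrow> bool" where
  "aggregation_condition M Y \<beta> X R \<longleftrightarrow>
     riskregion M Y \<beta> X \<subseteq> R \<and>
     (\<forall>x\<in>X. \<forall>z'::real. ereal z' < VaR M Y \<beta> x \<longrightarrow>
        measure M {w\<in>space M. Y w \<in> {y. ereal z' < ereal (loss x y) \<and> ereal (loss x y) \<le> VaR M Y \<beta> x} \<inter> R} > 0)"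

definition support_of :: "'a::topological_space measure \<Rightarrow> 'a set" where
  "support_of \<mu> = {y. \<forall>U. open U \<and> y \<in> U \<longrightarrow> emeasure \<mu> U > 0}"

text \<open>A beta-tail risk measure, viewed as a functional of the law (a Borel probability
  measure on the reals) of the random variable: it only depends on the quantile function on [beta,1].\<close>
definition tail_risk_measure :: "real \<Rightarrow> (real measure \<Rightarrow> ereal) \<Rightarrow> bool" where
  "tail_risk_measure \<beta> \<rho> \<longleftrightarrow>
     (\<forall>\<mu> \<nu>. prob_space \<mu> \<and> sets \<mu> = sets borel \<and> prob_space \<nu> \<and> sets \<nu> = sets borel \<and>
        (\<forall>u\<in>{\<beta>..1}. quantile \<mu> u = quantile \<nu> u) \<longrightarrow> \<rho> \<mu> = \<rho> \<nu>)"

definition emp_law :: "(nat \<Rightarrow> real) \<Rightarrow> nat \<Rightarrow> real measure" where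
  "emp_law g m = distr (measure_pmf (pmf_of_set {..<m})) borel g"

definition psi :: "'w measure \<Rightarrow> ('w \<Rightarrow> 'a::euclidean_space) \<Rightarrow> 'a set \<Rightarrow> 'a \<Rightarrow> 'a" where
  "psi M Y R y = (if y \<in> R then y else
     (1 / measure M {w\<in>space M. Y w \<notin> R}) *\<^sub>R set_lebesgue_integral M {w\<in>space M. Y w \<notin> R} Y)"

definition rho_tilde ::
  "(real measure \<Rightarrow> ereal) \<Rightarrow> 'w measure \<Rightarrow> ('w \<Rightarrow> 'a::euclidean_space) \<Rightarrow> 'a set
    \<Rightarrow> (nat \<Rightarrow> 'w \<Rightarrow> 'a) \<Rightarrow> 'w \<Rightarrow> nat \<Rightarrow> 'a \<Rightarrow> ereal" where
  "rho_tilde \<rho> M Y R Ys w m x = \<rho> (emp_law (\<lambda>i. loss x (psi M Y R (Ys i w))) m)"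

definition Nsamp :: "'a set \<Rightarrow> (nat \<Rightarrow> 'w \<Rightarrow> 'a) \<Rightarrow> 'w \<Rightarrow> nat \<Rightarrow> nat" where
  "Nsamp R Ys w n = (LEAST m. card {i\<in>{..<m}. Ys i w \<in> R} = n)"

definition ybar :: "'a set \<Rightarrow> (nat \<Rightarrow> 'w \<Rightarrow> 'a::euclidean_space) \<Rightarrow> 'w \<Rightarrow> nat \<Rightarrow> 'a" where
  "ybar R Ys w n = (1 / real (Nsamp R Ys w n - n)) *\<^sub>R
      (\<Sum>i\<in>{i\<in>{..<Nsamp R Ys w n}. Ys i w \<notin> R}. Ys i w)"

text \<open>hat rho_{n,beta}(x): rho of the discrete law putting mass 1/N(n) on f(x,Y_i) for each
  i < N(n) with Y_i in R and mass (N(n)-n)/N(n) on f(x, ybar_n).\<close>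
definition rho_hat ::
  "(real measure \<Rightarrow> ereal) \<Rightarrow> 'a set \<Rightarrow> (nat \<Rightarrow> 'w \<Rightarrow> 'a::euclidean_space) \<Rightarrow> 'w \<Rightarrow> nat \<Rightarrow> 'a \<Rightarrow> ereal" where
  "rho_hat \<rho> R Ys w n x = \<rho> (emp_law
     (\<lambda>i. if Ys i w \<in> R then loss x (Ys i w) else loss x (ybar R Ys w n)) (Nsamp R Ys w n))"

end

theory Submission
  imports Defs
begin

text \<open>
  Aggregation condition: for a portfolio \<open>x \<noteq> 0\<close>, some admissible portfolio \<open>x'\<close> is not
  parallel to \<open>x\<close>, so the open set where the loss of \<open>x\<close> lies strictly between \<open>z'\<close> and its VaR
  while the loss of \<open>x'\<close> exceeds its own VaR is nonempty. It lies in the risk region of \<open>x'\<close>,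
  hence in \<open>R\<close>, and has positive probability because \<open>Y\<close> has full support.

  Consistency: \<open>rho_hat\<close> and \<open>rho_tilde\<close> evaluate the tail risk measure at two empirical laws
  that differ only at the samples outside \<open>R\<close>, where one uses the sample mean \<open>ybar\<close> and the
  other the conditional mean E[Y | Y \<notin> R]. The loss at the conditional mean lies strictly below
  VaR, so by the strong law of large numbers, eventually more than a fraction \<open>1 - \<beta>\<close> of the
  samples have a loss above both replacement losses. Compactness makes this uniform in the
  portfolio: finitely many balls cover the portfolios, each with a set of samples of margin
  bounded away from zero. Then the two empirical quantile functions agree on [\<beta>, 1].
\<close>

section \<open>Averages of real sequences\<close>

lemma dyadic_window_exists:
  fixes L N0 m :: nat
  assumes "L \<ge> 1" "L * 2^N0 \<le> m"
  obtains n j where "N0 \<le> n" "L \<le> j" "j < 2 * L" "j * 2^n \<le> m" "m \<le> (j + 1) * 2^n"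
proof -
  have "\<exists>n\<ge>N0. L * 2^n \<le> m \<and> m < 2 * L * 2^n"
    using assms(2)
  proof (induction m rule: less_induct)
    case (less m)
    show ?case
    proof (cases "m < 2 * L * 2^N0")
      case False
      moreover have "0 < m" using False assms(1) by (cases "m = 0") auto
      ultimately have "L * 2^N0 \<le> m div 2" "m div 2 < m" by auto
      then obtain n where "n \<ge> N0" "L * 2^n \<le> m div 2" "m div 2 < 2 * L * 2^n"
        using less.IH by blast
      then show ?thesis by (intro exI[of _ "Suc n"]) auto
    qed (use less.prems in auto)
  qed
  then obtain n where "N0 \<le> n" "L * 2^n \<le> m" "m < 2 * L * 2^n" by blast
  define j where "j = m div 2^n"
  have "m = j * 2^n + m mod 2^n" "m mod 2^n < 2^n" by (simp_all add: j_def div_mult_mod_eq)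
  then have "j * 2^n \<le> m" "m \<le> (j + 1) * 2^n" by (linarith, simp only: distrib_right mult_1_left)
  moreover have "L \<le> j" "j < 2 * L"
    using \<open>L * 2^n \<le> m\<close> \<open>m < 2 * L * 2^n\<close>
    by (auto simp: j_def less_eq_div_iff_mult_less_eq div_less_iff_less_mult mult.assoc)
  ultimately show ?thesis using \<open>N0 \<le> n\<close> that by blast
qed

lemma incseq_ratio_near_dyadic:
  fixes S :: "nat \<Rightarrow> real"
  assumes "incseq S" "\<And>m. 0 \<le> S m" "1 \<le> L" "L \<le> j" "j * 2^n \<le> m" "m \<le> (j + 1) * 2^n"
    and near_j: "\<bar>S (j * 2^n) / (j * 2^n) - \<mu>\<bar> < \<epsilon>"
    and near_Suc_j: "\<bar>S ((j + 1) * 2^n) / ((j + 1) * 2^n) - \<mu>\<bar> < \<epsilon>"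
    and L: "(\<mu> + \<epsilon>) / L < \<epsilon>"
  shows "\<bar>S m / m - \<mu>\<bar> < 2 * \<epsilon>"
proof -
  define t :: real where "t = 2^n"
  define a b where "a = S (j * 2^n) / (j * t)" and "b = S ((j + 1) * 2^n) / ((j + 1) * t)"
  have "t > 0" "real j \<ge> L" "real L \<ge> 1" using assms(3,4) by (auto simp: t_def)
  have a: "\<bar>a - \<mu>\<bar> < \<epsilon>" and b: "\<bar>b - \<mu>\<bar> < \<epsilon>"
    using near_j near_Suc_j by (simp_all add: a_def b_def t_def distrib_right)
  have "S (j * 2^n) \<le> S m" "S m \<le> S ((j + 1) * 2^n)"
    using assms(1,5,6) by (auto dest: incseqD)
  moreover have "j * t \<le> m" "m \<le> (j + 1) * t" "0 < j * t"
    using of_nat_mono[OF assms(5), where 'a=real] of_nat_mono[OF assms(6), where 'a=real]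
      \<open>t > 0\<close> \<open>real j \<ge> L\<close> \<open>real L \<ge> 1\<close> by (simp_all add: t_def distrib_right)
  ultimately have "S (j * 2^n) / ((j + 1) * t) \<le> S m / m" "S m / m \<le> S ((j + 1) * 2^n) / (j * t)"
    using assms(2) by (auto intro!: frac_le)
  moreover have "S (j * 2^n) / ((j + 1) * t) = a - a / (j + 1)"
    "S ((j + 1) * 2^n) / (j * t) = b + b / j"
    using \<open>t > 0\<close> \<open>real j \<ge> L\<close> \<open>real L \<ge> 1\<close>
    by (simp_all add: a_def b_def divide_simps) (simp_all add: algebra_simps)
  moreover have "a / (j + 1) < \<epsilon>" "b / j < \<epsilon>"
  proof -
    have "0 \<le> a" "0 \<le> b" using assms(2) \<open>t > 0\<close> by (auto simp: a_def b_def)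
    then have "a / (j + 1) \<le> (\<mu> + \<epsilon>) / L" "b / j \<le> (\<mu> + \<epsilon>) / L"
      using a b \<open>real j \<ge> L\<close> \<open>real L \<ge> 1\<close> by (auto intro!: frac_le)
    then show "a / (j + 1) < \<epsilon>" "b / j < \<epsilon>" using L by linarith+
  qed
  ultimately show ?thesis
    using a b unfolding abs_less_iff by linarith
qed

lemma LIMSEQ_incseq_ratio_dyadic:
  fixes S :: "nat \<Rightarrow> real"
  assumes inc: "incseq S" and nonneg: "\<And>m. 0 \<le> S m"
    and lim: "\<And>j. j \<ge> 1 \<Longrightarrow> (\<lambda>n. S (j * 2^n) / (j * 2^n)) \<longlonglongrightarrow> \<mu>"
  shows "(\<lambda>m. S m / m) \<longlonglongrightarrow> \<mu>"
proof (rule LIMSEQ_I)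
  fix r :: real assume "r > 0"
  define \<epsilon> where "\<epsilon> = r / 3"
  have "\<epsilon> > 0" using \<open>r > 0\<close> by (simp add: \<epsilon>_def)
  have "\<mu> \<ge> 0"
    using lim[of 1] by (rule LIMSEQ_le_const) (auto intro!: exI[of _ 0] divide_nonneg_nonneg nonneg)
  obtain L :: nat where "L \<ge> 1" and L: "(\<mu> + \<epsilon>) / L < \<epsilon>"
  proof -
    obtain L0 :: nat where "(\<mu> + \<epsilon>) / \<epsilon> < L0" using reals_Archimedean2 by blast
    moreover have "1 \<le> (\<mu> + \<epsilon>) / \<epsilon>" using \<open>\<epsilon> > 0\<close> \<open>\<mu> \<ge> 0\<close> by simp
    ultimately have "1 < real L0" by linarith
    with \<open>(\<mu> + \<epsilon>) / \<epsilon> < L0\<close> show ?thesis using \<open>\<epsilon> > 0\<close>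
      by (intro that[of L0]) (auto simp: field_simps)
  qed
  have "\<forall>\<^sub>F n in sequentially. \<forall>j\<in>{L..2*L}. \<bar>S (j * 2^n) / (j * 2^n) - \<mu>\<bar> < \<epsilon>"
  proof (intro eventually_ball_finite ballI)
    fix j assume "j \<in> {L..2*L}"
    then show "\<forall>\<^sub>F n in sequentially. \<bar>S (j * 2^n) / (j * 2^n) - \<mu>\<bar> < \<epsilon>"
      using tendstoD[OF lim \<open>\<epsilon> > 0\<close>, of j] \<open>L \<ge> 1\<close> by (simp add: dist_real_def)
  qed simp
  then obtain N0 where N0: "\<And>n j. n \<ge> N0 \<Longrightarrow> L \<le> j \<Longrightarrow> j \<le> 2 * L \<Longrightarrow>
      \<bar>S (j * 2^n) / (j * 2^n) - \<mu>\<bar> < \<epsilon>"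
    unfolding eventually_sequentially by (meson atLeastAtMost_iff)
  show "\<exists>no. \<forall>m\<ge>no. norm (S m / m - \<mu>) < r"
  proof (intro exI allI impI)
    fix m assume "m \<ge> L * 2^N0"
    then obtain n j where "N0 \<le> n" "L \<le> j" "j < 2 * L" "j * 2^n \<le> m" "m \<le> (j + 1) * 2^n"
      using dyadic_window_exists[OF \<open>L \<ge> 1\<close>] by blast
    then have "\<bar>S m / m - \<mu>\<bar> < 2 * \<epsilon>"
      using N0[of n j] N0[of n "j + 1"] \<open>L \<ge> 1\<close>
      by (intro incseq_ratio_near_dyadic[OF inc nonneg _ _ _ _ _ _ L]) auto
    then show "norm (S m / m - \<mu>) < r" using \<open>r > 0\<close> by (simp add: \<epsilon>_def)
  qed
qed

lemma LIMSEQ_cesaro_mean: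
  fixes a :: "nat \<Rightarrow> real"
  assumes "a \<longlonglongrightarrow> \<mu>"
  shows "(\<lambda>m. (\<Sum>i<m. a i) / m) \<longlonglongrightarrow> \<mu>"
proof (rule LIMSEQ_I)
  fix r :: real assume "r > 0"
  then obtain N where N: "\<And>i. i \<ge> N \<Longrightarrow> \<bar>a i - \<mu>\<bar> < r / 2"
    using LIMSEQ_D[OF assms, of "r / 2"] by auto
  define C where "C = (\<Sum>i<N. \<bar>a i - \<mu>\<bar>)"
  obtain K :: nat where K: "2 * C / r < K" using reals_Archimedean2 by blast
  show "\<exists>no. \<forall>m\<ge>no. norm ((\<Sum>i<m. a i) / m - \<mu>) < r"
  proof (intro exI allI impI)
    fix m assume m: "m \<ge> N + K + 1"
    have "\<bar>\<Sum>i<m. a i - \<mu>\<bar> \<le> (\<Sum>i<m. \<bar>a i - \<mu>\<bar>)" by (rule sum_abs)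
    also have "\<dots> = C + (\<Sum>i\<in>{N..<m}. \<bar>a i - \<mu>\<bar>)"
    proof -
      have split: "{..<m} = {..<N} \<union> {N..<m}" using m by auto
      show ?thesis unfolding C_def split by (subst sum.union_disjoint) auto
    qed
    also have "(\<Sum>i\<in>{N..<m}. \<bar>a i - \<mu>\<bar>) \<le> (\<Sum>i\<in>{N..<m}. r / 2)"
      using N by (intro sum_mono) (auto intro: less_imp_le)
    also have "C + (\<Sum>i\<in>{N..<m}. r / 2) < m * r"
    proof -
      have "2 * C / r < m" using K m by linarith
      then have "C < m * (r / 2)" using \<open>r > 0\<close> by (simp add: field_simps)
      moreover have "(\<Sum>i\<in>{N..<m}. r / 2) \<le> m * (r / 2)" using \<open>r > 0\<close> by simp
      ultimately show ?thesis by linarith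
    qed
    finally have "\<bar>\<Sum>i<m. a i - \<mu>\<bar> < m * r" by simp
    moreover have "(\<Sum>i<m. a i) / m - \<mu> = (\<Sum>i<m. a i - \<mu>) / m"
      using m by (simp add: sum_subtractf diff_divide_distrib)
    ultimately show "norm ((\<Sum>i<m. a i) / m - \<mu>) < r"
      using m by (simp add: abs_divide divide_less_eq mult.commute)
  qed
qed

lemma LIMSEQ_dyadic_subseq:
  fixes f :: "nat \<Rightarrow> real"
  assumes "f \<longlonglongrightarrow> l" "j \<ge> 1"
  shows "(\<lambda>n. f (j * 2^n)) \<longlonglongrightarrow> l"
proof -
  have "strict_mono (\<lambda>n::nat. j * 2^n)" using assms(2) by (intro strict_monoI_Suc) auto
  from LIMSEQ_subseq_LIMSEQ[OF assms(1) this] show ?thesis by (simp add: comp_def)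
qed

lemma LIMSEQ_ratio_of_averages:
  fixes a c :: "nat \<Rightarrow> real"
  assumes "(\<lambda>m. a m / m) \<longlonglongrightarrow> \<alpha>" "(\<lambda>m. c m / m) \<longlonglongrightarrow> \<gamma>" "\<gamma> \<noteq> 0"
  shows "(\<lambda>m. a m / c m) \<longlonglongrightarrow> \<alpha> / \<gamma>"
proof -
  have "(\<lambda>m. (a m / m) / (c m / m)) \<longlonglongrightarrow> \<alpha> / \<gamma>"
    by (rule tendsto_divide[OF assms])
  moreover have "\<forall>\<^sub>F m in sequentially. (a m / m) / (c m / m) = a m / c m"
    by (rule eventually_sequentiallyI[of 1]) simp
  ultimately show ?thesis by (rule Lim_transform_eventually)
qed

lemma sum_indicator_greaterThan_le:
  fixes x :: real
  assumes "x \<ge> 0"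
  shows "(\<Sum>i<n. indicator {real (Suc i)<..} x) \<le> x"
proof (induction n)
  case (Suc n)
  show ?case
  proof (cases "real (Suc n) < x")
    case True
    have "(\<Sum>i<n. indicator {real (Suc i)<..} x :: real) \<le> (\<Sum>i<n. 1)"
      by (intro sum_mono) (auto simp: indicator_def)
    then show ?thesis using True by simp
  next
    case False
    then show ?thesis using Suc.IH by simp
  qed
qed (use assms in simp)

lemma sum_truncated_square_le:
  fixes x :: real
  assumes "x \<ge> 0"
  shows "(\<Sum>i<n. if x \<le> Suc i then x\<^sup>2 / (real (Suc i))\<^sup>2 else 0) \<le> 2 * x"
proof -
  define \<phi> where "\<phi> k = 1 / max (real k) x" for k :: nat
  have term_le: "(if x \<le> Suc i then x\<^sup>2 / (real (Suc i))\<^sup>2 else 0) \<le> 2 * x\<^sup>2 * (\<phi> (Suc i) - \<phi> (Suc (Suc i)))"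
    for i
  proof (cases "x \<le> Suc i")
    case True
    define k :: real where "k = Suc i"
    have "k \<ge> 1" by (simp add: k_def)
    then have "1 / k\<^sup>2 \<le> 2 * (1 / k - 1 / (k + 1))"
      by (simp add: divide_simps power2_eq_square)
    moreover have "\<phi> (Suc i) = 1 / k" "\<phi> (Suc (Suc i)) = 1 / (k + 1)"
      using True by (auto simp: \<phi>_def k_def)
    ultimately have "x\<^sup>2 * (1 / k\<^sup>2) \<le> x\<^sup>2 * (2 * (\<phi> (Suc i) - \<phi> (Suc (Suc i))))"
      by (intro mult_left_mono) auto
    then show ?thesis using True by (simp add: k_def algebra_simps)
  next
    case False
    then have "\<phi> (Suc i) = 1 / x" "\<phi> (Suc (Suc i)) \<le> 1 / x"
      by (auto simp: \<phi>_def max_def field_simps)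
    then show ?thesis using False by simp
  qed
  have "(\<Sum>i<n. if x \<le> Suc i then x\<^sup>2 / (real (Suc i))\<^sup>2 else 0)
      \<le> (\<Sum>i<n. 2 * x\<^sup>2 * (\<phi> (Suc i) - \<phi> (Suc (Suc i))))"
    by (intro sum_mono term_le)
  also have "\<dots> = 2 * x\<^sup>2 * (\<phi> 1 - \<phi> (Suc n))"
    by (simp add: sum_distrib_left[symmetric] sum_lessThan_telescope'[of "\<lambda>k. \<phi> (Suc k)"])
  also have "\<dots> \<le> 2 * x\<^sup>2 * \<phi> 1"
  proof -
    have "\<phi> (Suc n) \<ge> 0" using assms by (simp add: \<phi>_def)
    then show ?thesis by (simp add: mult_left_mono)
  qed
  also have "\<dots> \<le> 2 * x"
    using assms by (cases "x \<le> 1") (auto simp: \<phi>_def power2_eq_square mult_left_le)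
  finally show ?thesis .
qed

lemma sum_dyadic_inverse_square_le:
  fixes j i N :: nat
  assumes "j \<ge> 1"
  shows "(\<Sum>n\<in>{n\<in>{..<N}. i < j * 2^n}. 1 / (real (j * 2^n))\<^sup>2) \<le> 2 / (real (Suc i))\<^sup>2"
proof (cases "\<exists>n. i < j * 2^n")
  case False
  then show ?thesis by simp
next
  case True
  define n0 where "n0 = (LEAST n. i < j * 2^n)"
  have n0: "i < j * 2^n0" unfolding n0_def by (rule LeastI_ex[OF True])
  have "n0 \<le> n" if "i < j * 2^n" for n unfolding n0_def by (rule Least_le) (rule that)
  then have "(\<Sum>n\<in>{n\<in>{..<N}. i < j * 2^n}. 1 / (real (j * 2^n))\<^sup>2) \<le> (\<Sum>n\<in>{n0..<N}. 1 / (real (j * 2^n))\<^sup>2)"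
    by (intro sum_mono2) auto
  also have "\<dots> = (\<Sum>t<N - n0. 1 / (real (j * 2^(n0 + t)))\<^sup>2)"
    by (subst sum.atLeastLessThan_shift_0) (simp add: atLeast0LessThan)
  also have "\<dots> = (\<Sum>t<N - n0. 1 / (real (j * 2^n0))\<^sup>2 * (1 / 4)^t)"
    by (intro sum.cong refl) (simp add: power_add power2_eq_square field_simps flip: power_mult_distrib)
  also have "\<dots> = 1 / (real (j * 2^n0))\<^sup>2 * (\<Sum>t<N - n0. (1 / 4)^t)"
    by (simp add: sum_distrib_left)
  also have "\<dots> \<le> 1 / (real (Suc i))\<^sup>2 * 2"
  proof (intro mult_mono)
    show "1 / (real (j * 2^n0))\<^sup>2 \<le> 1 / (real (Suc i))\<^sup>2"
      using n0 \<open>j \<ge> 1\<close> by (intro divide_left_mono power_mono) (simp_all only: of_nat_le_iff Suc_le_eq, auto)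
    have "(\<Sum>t<N - n0. (1 / 4 :: real)^t) = (1 - (1 / 4)^(N - n0)) / (1 - 1 / 4)"
      by (simp add: sum_gp_strict)
    also have "\<dots> \<le> 2" using zero_le_power[of "1 / 4 :: real" "N - n0"] by (simp, linarith)
    finally show "(\<Sum>t<N - n0. (1 / 4 :: real)^t) \<le> 2" .
  qed (auto intro: sum_nonneg)
  finally show ?thesis by simp
qed

lemma sum_dyadic_partial_sums_le:
  fixes v :: "nat \<Rightarrow> real"
  assumes "j \<ge> 1" and nonneg: "\<And>i. v i \<ge> 0" and bound: "\<And>n. (\<Sum>i<n. v i / (real (Suc i))\<^sup>2) \<le> B"
  shows "(\<Sum>n<N. (\<Sum>i<j * 2^n. v i) / (real (j * 2^n))\<^sup>2) \<le> 2 * B"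
proof -
  define m where "m n = j * 2^n" for n
  have "m n \<le> m N" if "n < N" for n
    unfolding m_def using that \<open>j \<ge> 1\<close> by (intro mult_le_mono2 power_increasing) auto
  then have "(\<Sum>n<N. (\<Sum>i<m n. v i) / (real (m n))\<^sup>2) = (\<Sum>n<N. \<Sum>i\<in>{i\<in>{..<m N}. i < m n}. v i / (real (m n))\<^sup>2)"
    by (intro sum.cong) (auto simp: sum_divide_distrib intro!: sum.cong intro: less_le_trans)
  also have "\<dots> = (\<Sum>i<m N. \<Sum>n\<in>{n\<in>{..<N}. i < m n}. v i / (real (m n))\<^sup>2)"
    by (rule sum.swap_restrict) auto
  also have "\<dots> = (\<Sum>i<m N. v i * (\<Sum>n\<in>{n\<in>{..<N}. i < m n}. 1 / (real (m n))\<^sup>2))"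
    by (simp add: sum_distrib_left)
  also have "\<dots> \<le> (\<Sum>i<m N. v i * (2 / (real (Suc i))\<^sup>2))"
    using sum_dyadic_inverse_square_le[OF \<open>j \<ge> 1\<close>]
    by (intro sum_mono mult_left_mono nonneg) (simp add: m_def)
  also have "\<dots> = 2 * (\<Sum>i<m N. v i / (real (Suc i))\<^sup>2)"
    by (simp add: sum_distrib_left mult.commute)
  also have "\<dots> \<le> 2 * B" using bound by simp
  finally show ?thesis unfolding m_def .
qed

lemma LIMSEQ_zero_if_eventually_abs_less_inverse_Suc:
  fixes f :: "nat \<Rightarrow> real"
  assumes "\<And>k. \<forall>\<^sub>F n in sequentially. \<bar>f n\<bar> < 1 / Suc k"
  shows "f \<longlonglongrightarrow> 0"
proof (rule LIMSEQ_I)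
  fix r :: real assume "r > 0"
  then obtain k where "1 / Suc k < r"
    using reals_Archimedean by (metis inverse_eq_divide of_nat_Suc)
  with assms[of k] have "\<forall>\<^sub>F n in sequentially. norm (f n - 0) < r"
    by (auto elim: eventually_mono)
  then show "\<exists>no. \<forall>n\<ge>no. norm (f n - 0) < r" by (simp add: eventually_sequentially)
qed

section \<open>The strong law of large numbers\<close>

lemma distr_comp_eq:
  assumes "distr M N X = distr M N Z" "X \<in> measurable M N" "Z \<in> measurable M N"
    "f \<in> measurable N L"
  shows "distr M L (\<lambda>w. f (X w)) = distr M L (\<lambda>w. f (Z w))"
proof -
  have "distr M L (\<lambda>w. f (X w)) = distr (distr M N X) L f"
    using assms by (subst distr_distr) (auto simp: comp_def)
  also have "\<dots> = distr M L (\<lambda>w. f (Z w))"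
    using assms by (subst assms(1), subst distr_distr) (auto simp: comp_def)
  finally show ?thesis .
qed

lemma integral_comp_eq_of_distr_eq:
  fixes g :: "'b::topological_space \<Rightarrow> 'c::{banach, second_countable_topology}"
  assumes "distr M borel X = distr M borel Z" "X \<in> borel_measurable M" "Z \<in> borel_measurable M"
    "g \<in> borel_measurable borel"
  shows "integral\<^sup>L M (\<lambda>w. g (X w)) = integral\<^sup>L M (\<lambda>w. g (Z w))"
  using assms by (metis integral_distr)

lemma (in finite_measure) integrable_indicator_comp:
  assumes [measurable]: "f \<in> measurable M N" "S \<in> sets N"
  shows "integrable M (\<lambda>w. indicator S (f w) :: real)"
  by (rule integrable_const_bound[where B=1]) (auto simp: indicator_def)

text \<open>
  Etemadi's argument for nonnegative summands: truncate \<open>X i\<close> at \<open>i + 1\<close>; the truncation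
  changes only finitely many terms almost surely (Borel--Cantelli), the centred truncations
  average to zero along each geometric subsequence \<open>j * 2^n\<close> (Chebyshev and Borel--Cantelli,
  with summable variances), and monotonicity interpolates between these subsequences.
\<close>

locale iid_nonneg = prob_space +
  fixes X :: "nat \<Rightarrow> 'a \<Rightarrow> real" and X0 :: "'a \<Rightarrow> real"
  assumes indep: "indep_vars (\<lambda>_. borel) X UNIV"
    and distr_eq: "\<And>i. distr M borel (X i) = distr M borel X0"
    and measurable_X0[measurable]: "X0 \<in> borel_measurable M"
    and integrable_X0: "integrable M X0"
    and nonneg: "\<And>i w. 0 \<le> X i w" "\<And>w. 0 \<le> X0 w"
begin

lemma measurable_X[measurable]: "X i \<in> borel_measurable M"
  using indep unfolding indep_vars_def by auto

lemma expectation_comp_X: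
  fixes g :: "real \<Rightarrow> real"
  shows "g \<in> borel_measurable borel \<Longrightarrow> expectation (\<lambda>w. g (X i w)) = expectation (\<lambda>w. g (X0 w))"
  by (rule integral_comp_eq_of_distr_eq[OF distr_eq[of i], where g=g]) auto

lemma integrable_indicator_X0: "S \<in> sets borel \<Longrightarrow> integrable M (\<lambda>w. indicator S (X0 w) :: real)"
  by (rule integrable_indicator_comp[OF measurable_X0])

definition trunc :: "nat \<Rightarrow> real \<Rightarrow> real" where
  "trunc i x = (if x \<le> Suc i then x else 0)"

definition truncated :: "nat \<Rightarrow> 'a \<Rightarrow> real" where
  "truncated i w = trunc i (X i w)"

definition centred :: "nat \<Rightarrow> 'a \<Rightarrow> real" where
  "centred i w = truncated i w - expectation (truncated i)"

lemma measurable_trunc[measurable]: "trunc i \<in> borel_measurable borel"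
  unfolding trunc_def by measurable

lemma measurable_truncated[measurable]: "truncated i \<in> borel_measurable M"
  unfolding truncated_def by measurable

lemma measurable_centred[measurable]: "centred i \<in> borel_measurable M"
  unfolding centred_def by measurable

lemma abs_trunc_le: "0 \<le> x \<Longrightarrow> \<bar>trunc i x\<bar> \<le> Suc i"
  by (simp add: trunc_def)

lemma trunc_square_le: "0 \<le> x \<Longrightarrow> (trunc i x)\<^sup>2 \<le> (Suc i)\<^sup>2"
  by (auto simp: trunc_def intro: power_mono)

lemma integrable_truncated [simp]: "integrable M (truncated i)"
  using abs_trunc_le[OF nonneg(1)]
  by (intro integrable_const_bound[where B="Suc i"]) (auto simp: truncated_def)

lemma integrable_centred [simp]: "integrable M (centred i)"
  unfolding centred_def by simp

lemma integrable_truncated_square [simp]: "integrable M (\<lambda>w. (truncated i w)\<^sup>2)"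
  using trunc_square_le[OF nonneg(1)]
  by (intro integrable_const_bound[where B="(Suc i)\<^sup>2"]) (auto simp: truncated_def)

lemma integrable_trunc_square: "integrable M (\<lambda>w. (trunc i (X0 w))\<^sup>2 / c)"
  using trunc_square_le[OF nonneg(2)]
  by (intro integrable_divide integrable_const_bound[where B="(Suc i)\<^sup>2"]) auto

lemma integrable_centred_mult [simp]: "integrable M (\<lambda>w. centred i w * centred k w)"
proof -
  have "\<bar>centred i w\<bar> \<le> Suc i + \<bar>expectation (truncated i)\<bar>" for i w
    using abs_trunc_le[OF nonneg(1), of i i w] by (simp add: centred_def truncated_def)
  then show ?thesis
    by (intro integrable_const_bound[where B="(Suc i + \<bar>expectation (truncated i)\<bar>) *
          (Suc k + \<bar>expectation (truncated k)\<bar>)"]) (auto simp: abs_mult intro!: mult_mono)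
qed

lemma expectation_truncated_tendsto: "(\<lambda>i. expectation (truncated i)) \<longlonglongrightarrow> expectation X0"
proof -
  have "(\<lambda>i. expectation (\<lambda>w. trunc i (X0 w))) \<longlonglongrightarrow> expectation X0"
  proof (rule integral_dominated_convergence[where w=X0])
    show "AE w in M. (\<lambda>i. trunc i (X0 w)) \<longlonglongrightarrow> X0 w" for w
    proof (rule AE_I2)
      fix w
      obtain N :: nat where "X0 w \<le> N" using real_arch_simple by blast
      then have "\<forall>i\<ge>N. trunc i (X0 w) = X0 w" by (auto simp: trunc_def)
      then show "(\<lambda>i. trunc i (X0 w)) \<longlonglongrightarrow> X0 w"
        by (intro tendsto_eventually) (auto simp: eventually_sequentially)
    qed
    show "AE w in M. norm (trunc i (X0 w)) \<le> X0 w" for i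
      using nonneg(2) by (auto simp: trunc_def)
  qed (auto simp: integrable_X0)
  moreover have "expectation (truncated i) = expectation (\<lambda>w. trunc i (X0 w))" for i
    using expectation_comp_X[of "trunc i" i] by (simp add: truncated_def[abs_def])
  ultimately show ?thesis by simp
qed

lemma AE_eventually_eq_truncated: "AE w in M. \<forall>\<^sub>F i in sequentially. X i w = truncated i w"
proof -
  define A where "A i = {w\<in>space M. real (Suc i) < X i w}" for i
  have [measurable]: "A i \<in> sets M" for i unfolding A_def by measurable
  have "prob (A i) = expectation (\<lambda>w. indicator {real (Suc i)<..} (X0 w))" for i
  proof -
    have "prob (A i) = expectation (indicator (A i))" by simp
    also have "\<dots> = expectation (\<lambda>w. indicator {real (Suc i)<..} (X i w))"
      by (intro Bochner_Integration.integral_cong) (auto simp: A_def indicator_def)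
    also have "\<dots> = expectation (\<lambda>w. indicator {real (Suc i)<..} (X0 w))"
      by (simp add: expectation_comp_X)
    finally show ?thesis .
  qed
  moreover have "(\<Sum>i<n. expectation (\<lambda>w. indicator {real (Suc i)<..} (X0 w))) \<le> expectation X0" for n
  proof -
    have "(\<Sum>i<n. expectation (\<lambda>w. indicator {real (Suc i)<..} (X0 w) :: real))
        = expectation (\<lambda>w. \<Sum>i<n. indicator {real (Suc i)<..} (X0 w))"
      by (rule Bochner_Integration.integral_sum[symmetric]) (simp add: integrable_indicator_X0)
    also have "\<dots> \<le> expectation X0"
      using sum_indicator_greaterThan_le[OF nonneg(2)]
      by (intro integral_mono Bochner_Integration.integrable_sum integrable_X0)
         (simp_all add: integrable_indicator_X0)
    finally show ?thesis .
  qed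
  ultimately have "summable (\<lambda>i. prob (A i))"
    by (intro summableI_nonneg_bounded[where x="expectation X0"]) auto
  then have "AE w in M. \<forall>\<^sub>F i in sequentially. w \<in> space M - A i"
    by (intro borel_cantelli_AE1) (auto simp: less_top[symmetric])
  then show ?thesis
    by (rule AE_mp) (auto intro!: AE_I2 elim!: eventually_mono simp: A_def truncated_def trunc_def)
qed

lemma expectation_centred [simp]: "expectation (centred i) = 0"
  unfolding centred_def by (simp add: prob_space)

lemma expectation_centred_mult:
  assumes "i \<noteq> k"
  shows "expectation (\<lambda>w. centred i w * centred k w) = 0"
proof -
  have "indep_vars (\<lambda>_. borel) (\<lambda>i w. trunc i (X i w) - expectation (truncated i)) UNIV"
    by (rule indep_vars_compose2[OF indep]) measurable
  moreover have "(\<lambda>i w. trunc i (X i w) - expectation (truncated i)) = centred"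
    by (simp add: fun_eq_iff centred_def truncated_def)
  ultimately have "indep_vars (\<lambda>_. borel) centred {i, k}"
    by (auto intro: indep_vars_subset)
  then have "expectation (\<lambda>w. \<Prod>l\<in>{i, k}. centred l w) = (\<Prod>l\<in>{i, k}. expectation (centred l))"
    by (rule indep_vars_lebesgue_integral[rotated]) auto
  then show ?thesis using assms by simp
qed

lemma expectation_sum_centred_square_le:
  assumes "finite I"
  shows "expectation (\<lambda>w. (\<Sum>i\<in>I. centred i w)\<^sup>2) \<le> (\<Sum>i\<in>I. expectation (\<lambda>w. (truncated i w)\<^sup>2))"
proof -
  have "expectation (\<lambda>w. (\<Sum>i\<in>I. centred i w)\<^sup>2) = (\<Sum>i\<in>I. \<Sum>k\<in>I. expectation (\<lambda>w. centred i w * centred k w))"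
    by (simp add: power2_eq_square sum_product Bochner_Integration.integral_sum
        Bochner_Integration.integrable_sum)
  also have "\<dots> = (\<Sum>i\<in>I. variance (truncated i))"
    using assms expectation_centred_mult
    by (intro sum.cong refl) (simp add: sum.remove centred_def power2_eq_square)
  also have "\<dots> \<le> (\<Sum>i\<in>I. expectation (\<lambda>w. (truncated i w)\<^sup>2))"
    by (intro sum_mono) (simp add: variance_eq)
  finally show ?thesis .
qed

lemma prob_abs_sum_centred_ge_le:
  assumes "finite I" "a > 0"
  shows "prob {w\<in>space M. a \<le> \<bar>\<Sum>i\<in>I. centred i w\<bar>} \<le> (\<Sum>i\<in>I. expectation (\<lambda>w. (truncated i w)\<^sup>2)) / a\<^sup>2"
proof -
  define f where "f = (\<lambda>w. \<Sum>i\<in>I. centred i w)"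
  have "expectation f = 0" by (simp add: f_def Bochner_Integration.integral_sum)
  moreover have "integrable M (\<lambda>w. (f w)\<^sup>2)"
    by (simp add: f_def power2_eq_square sum_product Bochner_Integration.integrable_sum)
  ultimately have "prob {w\<in>space M. a \<le> \<bar>f w\<bar>} \<le> expectation (\<lambda>w. (f w)\<^sup>2) / a\<^sup>2"
    using Chebyshev_inequality[of f a] assms(2) by (simp add: f_def)
  also have "\<dots> \<le> (\<Sum>i\<in>I. expectation (\<lambda>w. (truncated i w)\<^sup>2)) / a\<^sup>2"
    unfolding f_def by (intro divide_right_mono expectation_sum_centred_square_le assms) simp
  finally show ?thesis by (simp add: f_def)
qed

lemma sum_second_moment_truncated_le:
  "(\<Sum>i<n. expectation (\<lambda>w. (truncated i w)\<^sup>2) / (real (Suc i))\<^sup>2) \<le> 2 * expectation X0"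
proof -
  have "(\<Sum>i<n. expectation (\<lambda>w. (truncated i w)\<^sup>2) / (real (Suc i))\<^sup>2)
      = expectation (\<lambda>w. \<Sum>i<n. (trunc i (X0 w))\<^sup>2 / (real (Suc i))\<^sup>2)"
    by (subst Bochner_Integration.integral_sum)
       (simp_all add: integrable_trunc_square truncated_def expectation_comp_X[where g="\<lambda>x. (trunc _ x)\<^sup>2"])
  also have "\<dots> \<le> expectation (\<lambda>w. 2 * X0 w)"
  proof (rule integral_mono)
    fix w
    have "(\<Sum>i<n. (trunc i (X0 w))\<^sup>2 / (real (Suc i))\<^sup>2)
        = (\<Sum>i<n. if X0 w \<le> Suc i then (X0 w)\<^sup>2 / (real (Suc i))\<^sup>2 else 0)"
      by (intro sum.cong) (auto simp: trunc_def)
    also have "\<dots> \<le> 2 * X0 w" by (rule sum_truncated_square_le[OF nonneg(2)])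
    finally show "(\<Sum>i<n. (trunc i (X0 w))\<^sup>2 / (real (Suc i))\<^sup>2) \<le> 2 * X0 w" .
  qed (simp_all add: integrable_trunc_square integrable_X0)
  finally show ?thesis by simp
qed

lemma summable_prob_dyadic_sum_centred_ge:
  assumes "j \<ge> 1" "\<epsilon> > 0"
  shows "summable (\<lambda>n. prob {w\<in>space M. \<epsilon> * real (j * 2^n) \<le> \<bar>\<Sum>i<j * 2^n. centred i w\<bar>})"
proof (rule summableI_nonneg_bounded)
  fix N
  have "(\<Sum>n<N. prob {w\<in>space M. \<epsilon> * real (j * 2^n) \<le> \<bar>\<Sum>i<j * 2^n. centred i w\<bar>})
      \<le> (\<Sum>n<N. (\<Sum>i<j * 2^n. expectation (\<lambda>w. (truncated i w)\<^sup>2)) / (\<epsilon> * real (j * 2^n))\<^sup>2)"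
    using assms by (intro sum_mono prob_abs_sum_centred_ge_le) auto
  also have "\<dots> = (\<Sum>n<N. (\<Sum>i<j * 2^n. expectation (\<lambda>w. (truncated i w)\<^sup>2)) / (real (j * 2^n))\<^sup>2) / \<epsilon>\<^sup>2"
    by (simp add: sum_divide_distrib power_mult_distrib divide_divide_eq_left mult.commute)
  also have "\<dots> \<le> 2 * (2 * expectation X0) / \<epsilon>\<^sup>2"
    using assms(1) sum_second_moment_truncated_le
    by (intro divide_right_mono sum_dyadic_partial_sums_le) (auto intro: integral_nonneg_AE)
  finally show "(\<Sum>n<N. prob {w\<in>space M. \<epsilon> * real (j * 2^n) \<le> \<bar>\<Sum>i<j * 2^n. centred i w\<bar>})
      \<le> 2 * (2 * expectation X0) / \<epsilon>\<^sup>2" .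
qed simp

lemma AE_dyadic_average_centred_tendsto_0:
  "AE w in M. \<forall>j\<ge>1. (\<lambda>n. (\<Sum>i<j * 2^n. centred i w) / real (j * 2^n)) \<longlonglongrightarrow> 0"
proof -
  have "AE w in M. \<forall>\<^sub>F n in sequentially.
      w \<in> space M - {w\<in>space M. 1 / Suc k * real (j * 2^n) \<le> \<bar>\<Sum>i<j * 2^n. centred i w\<bar>}"
    if "j \<ge> 1" for j k
    using that by (intro borel_cantelli_AE1 summable_prob_dyadic_sum_centred_ge)
      (auto simp: less_top[symmetric])
  then have "\<forall>k j. AE w in M. j \<ge> 1 \<longrightarrow>
      (\<forall>\<^sub>F n in sequentially. \<bar>(\<Sum>i<j * 2^n. centred i w) / real (j * 2^n)\<bar> < 1 / Suc k)"
    by (auto elim!: AE_mp intro!: AE_I2 elim: eventually_mono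
        simp: not_le abs_divide pos_divide_less_eq)
  then have "AE w in M. \<forall>k j. j \<ge> 1 \<longrightarrow>
      (\<forall>\<^sub>F n in sequentially. \<bar>(\<Sum>i<j * 2^n. centred i w) / real (j * 2^n)\<bar> < 1 / Suc k)"
    by (simp add: AE_all_countable)
  then show ?thesis
    by (rule AE_mp) (auto intro!: AE_I2 LIMSEQ_zero_if_eventually_abs_less_inverse_Suc)
qed

theorem AE_average_tendsto: "AE w in M. (\<lambda>m. (\<Sum>i<m. X i w) / m) \<longlonglongrightarrow> expectation X0"
  using AE_eventually_eq_truncated AE_dyadic_average_centred_tendsto_0
proof eventually_elim
  case (elim w)
  show ?case
  proof (rule LIMSEQ_incseq_ratio_dyadic)
    show "incseq (\<lambda>m. \<Sum>i<m. X i w)" by (rule incseq_SucI) (simp add: nonneg)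
    show "0 \<le> (\<Sum>i<m. X i w)" for m by (intro sum_nonneg nonneg)
    fix j :: nat assume "j \<ge> 1"
    have "(\<lambda>i. X i w - truncated i w) \<longlonglongrightarrow> 0"
      using elim(1) by (auto intro: tendsto_eventually elim: eventually_mono)
    from LIMSEQ_dyadic_subseq[OF LIMSEQ_cesaro_mean[OF this] \<open>j \<ge> 1\<close>]
      LIMSEQ_dyadic_subseq[OF LIMSEQ_cesaro_mean[OF expectation_truncated_tendsto] \<open>j \<ge> 1\<close>]
      elim(2) \<open>j \<ge> 1\<close>
    have "(\<lambda>n. (\<Sum>i<j * 2^n. X i w - truncated i w) / (j * 2^n) + (\<Sum>i<j * 2^n. centred i w) / (j * 2^n)
        + (\<Sum>i<j * 2^n. expectation (truncated i)) / (j * 2^n)) \<longlonglongrightarrow> 0 + 0 + expectation X0"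
      by (intro tendsto_add) auto
    then show "(\<lambda>n. (\<Sum>i<j * 2^n. X i w) / (j * 2^n)) \<longlonglongrightarrow> expectation X0"
      by (simp add: centred_def sum_subtractf flip: add_divide_distrib)
  qed
qed

end

theorem (in prob_space) strong_law_of_large_numbers:
  fixes Z :: "nat \<Rightarrow> 'a \<Rightarrow> real"
  assumes indep: "indep_vars (\<lambda>_. borel) Z UNIV"
    and distr_eq: "\<And>i. distr M borel (Z i) = distr M borel Z0"
    and [measurable]: "Z0 \<in> borel_measurable M" and "integrable M Z0"
  shows "AE w in M. (\<lambda>m. (\<Sum>i<m. Z i w) / m) \<longlonglongrightarrow> expectation Z0"
proof -
  have [measurable]: "Z i \<in> borel_measurable M" for i
    using indep unfolding indep_vars_def by auto
  have iid_part: "iid_nonneg M (\<lambda>i w. f (Z i w)) (\<lambda>w. f (Z0 w))"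
    if [measurable]: "f \<in> borel_measurable borel" and "\<And>x. 0 \<le> f x" "integrable M (\<lambda>w. f (Z0 w))" for f
    using that(2,3) by unfold_locales
      (auto intro: indep_vars_compose2[OF indep] distr_comp_eq[OF distr_eq])
  interpret pos: iid_nonneg M "\<lambda>i w. max 0 (Z i w)" "\<lambda>w. max 0 (Z0 w)"
    by (rule iid_part) (auto simp: \<open>integrable M Z0\<close>)
  interpret neg: iid_nonneg M "\<lambda>i w. max 0 (- Z i w)" "\<lambda>w. max 0 (- Z0 w)"
    by (rule iid_part) (auto simp: \<open>integrable M Z0\<close>)
  have "expectation Z0 = expectation (\<lambda>w. max 0 (Z0 w) - max 0 (- Z0 w))"
    by (intro Bochner_Integration.integral_cong) auto
  also have "\<dots> = expectation (\<lambda>w. max 0 (Z0 w)) - expectation (\<lambda>w. max 0 (- Z0 w))"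
    by (rule Bochner_Integration.integral_diff) (auto simp: \<open>integrable M Z0\<close>)
  finally have expectation_split: "expectation Z0 = \<dots>" .
  have average_split:
    "(\<Sum>i<m. Z i w) / m = (\<Sum>i<m. max 0 (Z i w)) / m - (\<Sum>i<m. max 0 (- Z i w)) / m" for m w
  proof -
    have "(\<Sum>i<m. Z i w) = (\<Sum>i<m. max 0 (Z i w) - max 0 (- Z i w))" by (intro sum.cong) auto
    then show ?thesis by (simp add: sum_subtractf diff_divide_distrib)
  qed
  show ?thesis
    using pos.AE_average_tendsto neg.AE_average_tendsto
    by eventually_elim (unfold average_split expectation_split, rule tendsto_diff)
qed

corollary (in prob_space) strong_law_of_large_numbers_comp:
  fixes Z :: "nat \<Rightarrow> 'a \<Rightarrow> 'b::topological_space" and h :: "'b \<Rightarrow> real"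
  assumes indep: "indep_vars (\<lambda>_. borel) Z UNIV"
    and distr_eq: "\<And>i. distr M borel (Z i) = distr M borel Z0"
    and [measurable]: "Z0 \<in> borel_measurable M" "h \<in> borel_measurable borel"
    and "integrable M (\<lambda>w. h (Z0 w))"
  shows "AE w in M. (\<lambda>m. (\<Sum>i<m. h (Z i w)) / m) \<longlonglongrightarrow> expectation (\<lambda>w. h (Z0 w))"
proof (rule strong_law_of_large_numbers)
  have [measurable]: "Z i \<in> borel_measurable M" for i
    using indep unfolding indep_vars_def by auto
  show "indep_vars (\<lambda>_. borel) (\<lambda>i w. h (Z i w)) UNIV"
    by (rule indep_vars_compose2[OF indep]) measurable
  show "distr M borel (\<lambda>w. h (Z i w)) = distr M borel (\<lambda>w. h (Z0 w))" for i
    by (rule distr_comp_eq[OF distr_eq]) auto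
qed (use assms in auto)

section \<open>Quantiles, value-at-risk and the aggregation condition\<close>

lemma quantile_real_distribution:
  assumes "real_distribution \<mu>" "0 < u" "u < 1"
  obtains q where "quantile \<mu> u = ereal q" "u \<le> measure \<mu> {..q}" "measure \<mu> {..<q} \<le> u"
proof -
  interpret real_distribution \<mu> by (rule assms(1))
  define S where "S = {z. u \<le> cdf \<mu> z}"
  obtain z0 where "u < cdf \<mu> z0"
    using order_tendstoD(1)[OF cdf_lim_at_top_prob \<open>u < 1\<close>] by (auto simp: eventually_at_top_linorder)
  then have "S \<noteq> {}" unfolding S_def using less_imp_le by blast
  obtain N where N: "\<And>z. z \<le> N \<Longrightarrow> cdf \<mu> z < u"
    using order_tendstoD(2)[OF cdf_lim_at_bot \<open>0 < u\<close>] by (auto simp: eventually_at_bot_linorder)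
  have "N \<le> s" if "s \<in> S" for s
    using that N[of s] by (cases "s \<le> N") (auto simp: S_def)
  then have "bdd_below S" by (rule bdd_belowI)
  define q where "q = Inf S"
  have "quantile \<mu> u = ereal q"
    using ereal_Inf'[OF \<open>bdd_below S\<close> \<open>S \<noteq> {}\<close>] by (simp add: quantile_def q_def S_def cdf_def)
  moreover have "u \<le> cdf \<mu> q"
  proof (rule tendsto_lowerbound)
    show "(cdf \<mu> \<longlongrightarrow> cdf \<mu> q) (at_right q)"
      using cdf_is_right_cont by (simp add: continuous_within)
    show "\<forall>\<^sub>F z in at_right q. u \<le> cdf \<mu> z"
    proof (rule eventually_at_rightI[of q "q + 1"])
      fix z assume "z \<in> {q<..<q + 1}"
      then obtain s where "s \<in> S" "s < z"
        using cInf_less_iff[OF \<open>S \<noteq> {}\<close> \<open>bdd_below S\<close>] by (auto simp: q_def)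
      then show "u \<le> cdf \<mu> z" using cdf_nondecreasing[of s z] by (simp add: S_def)
    qed simp
  qed simp
  moreover have "measure \<mu> {..<q} \<le> u"
  proof (rule tendsto_upperbound[OF cdf_at_left])
    have "cdf \<mu> z < u" if "z < q" for z
      using that cInf_lower[OF _ \<open>bdd_below S\<close>, of z] by (force simp: S_def q_def)
    then show "\<forall>\<^sub>F z in at_left q. cdf \<mu> z \<le> u"
      by (intro eventually_at_leftI[of "q - 1"]) (auto intro: less_imp_le)
  qed simp
  ultimately show ?thesis by (intro that) (auto simp: cdf_def)
qed

lemma continuous_on_loss: "continuous_on UNIV (loss x)"
  unfolding loss_def by (intro continuous_intros)

lemma measurable_loss[measurable]: "loss x \<in> borel_measurable borel"
  unfolding loss_def by measurable

lemma loss_zero [simp]: "loss 0 y = 0"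
  by (simp add: loss_def)

lemma (in prob_space) VaR_eq_ereal:
  assumes [measurable]: "Y \<in> borel_measurable M" and "0 < \<beta>" "\<beta> < 1"
  obtains q where "VaR M Y \<beta> x = ereal q" "\<beta> \<le> prob {w\<in>space M. loss x (Y w) \<le> q}"
    "prob {w\<in>space M. loss x (Y w) < q} \<le> \<beta>"
proof -
  let ?\<mu> = "distr M borel (\<lambda>w. loss x (Y w))"
  have "measure ?\<mu> A = prob {w\<in>space M. loss x (Y w) \<in> A}" if "A \<in> sets borel" for A
    using that by (subst measure_distr) (auto simp: vimage_def Int_def conj_commute)
  then show ?thesis
    using quantile_real_distribution[OF real_distribution_distr[of "\<lambda>w. loss x (Y w)"] assms(2,3)] that
    by (auto simp: VaR_def)
qed

lemma (in prob_space) VaR_zero: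
  assumes "Y \<in> borel_measurable M" "0 < \<beta>" "\<beta> < 1"
  shows "VaR M Y \<beta> 0 = 0"
proof -
  obtain q where q: "VaR M Y \<beta> 0 = ereal q" "\<beta> \<le> prob {w\<in>space M. loss 0 (Y w) \<le> q}"
      "prob {w\<in>space M. loss 0 (Y w) < q} \<le> \<beta>"
    using VaR_eq_ereal[OF assms] .
  have "0 \<le> q" using q(2) \<open>0 < \<beta>\<close> by (cases "0 \<le> q") auto
  moreover have "\<not> 0 < q" using q(3) \<open>\<beta> < 1\<close> by (auto simp: prob_space)
  ultimately show ?thesis using q(1) by (simp add: zero_ereal_def)
qed

lemma mem_riskregion:
  assumes "x \<in> X" "VaR M Y \<beta> x = ereal q" "q \<le> loss x y"
  shows "y \<in> riskregion M Y \<beta> X"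
  unfolding riskregion_def using assms by (intro UN_I[OF assms(1)]) (simp add: riskregion_x_def)

lemma independent_pair_not_in_span_singleton:
  fixes x x1 x2 :: "'a::euclidean_space"
  assumes "independent {x1, x2}" "x1 \<noteq> x2"
  shows "x1 \<notin> span {x} \<or> x2 \<notin> span {x}"
proof (rule ccontr)
  assume "\<not> (x1 \<notin> span {x} \<or> x2 \<notin> span {x})"
  then have "card {x1, x2} \<le> dim (span {x})"
    using assms(1) by (intro independent_card_le_dim) auto
  also have "\<dots> \<le> 1" using dim_le_card[of "{x}" "span {x}"] by simp
  finally show False using assms(2) by simp
qed

lemma exists_loss_between_and_loss_above:
  fixes x x' :: "'a::euclidean_space"
  assumes "x \<noteq> 0" "x' \<notin> span {x}" "a < b"
  shows "\<exists>y. a < loss x y \<and> loss x y < b \<and> c < loss x' y"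
proof -
  \<comment> \<open>move along x to fix the first loss at the midpoint, then along the component of x'
    orthogonal to x to push the second loss above c\<close>
  define v where "v = x' - ((x' \<bullet> x) / (x \<bullet> x)) *\<^sub>R x"
  have "x \<bullet> x > 0" using assms(1) by simp
  have "v \<noteq> 0"
  proof
    assume "v = 0"
    then have "x' = ((x' \<bullet> x) / (x \<bullet> x)) *\<^sub>R x" by (simp add: v_def)
    then have "x' \<in> span {x}" by (metis span_base span_scale singletonI)
    then show False using assms(2) by simp
  qed
  have "x \<bullet> v = 0" using \<open>x \<bullet> x > 0\<close> by (simp add: v_def inner_diff_right inner_commute)
  have "x' \<bullet> v = v \<bullet> v" using \<open>x \<bullet> v = 0\<close> by (simp add: v_def inner_diff_left inner_commute)
  define \<alpha> where "\<alpha> = - (a + b) / 2 / (x \<bullet> x)"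
  define \<gamma> where "\<gamma> = (- \<alpha> * (x' \<bullet> x) - c - 1) / (v \<bullet> v)"
  define y where "y = \<alpha> *\<^sub>R x + \<gamma> *\<^sub>R v"
  have "loss x y = (a + b) / 2"
    using \<open>x \<bullet> x > 0\<close> \<open>x \<bullet> v = 0\<close> by (simp add: loss_def y_def \<alpha>_def inner_add_right) (simp add: field_simps)
  moreover have "loss x' y = c + 1"
    using \<open>v \<noteq> 0\<close> \<open>x' \<bullet> v = v \<bullet> v\<close> by (simp add: loss_def y_def \<gamma>_def inner_add_right inner_commute)
  ultimately show ?thesis using \<open>a < b\<close> by (intro exI[of _ y]) auto
qed

lemma (in prob_space) prob_riskregion_slice_pos:
  fixes Y :: "'a \<Rightarrow> 'b::euclidean_space"
  assumes [measurable]: "Y \<in> borel_measurable M" "R \<in> sets borel"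
    and "0 < \<beta>" "\<beta> < 1" and support: "support_of (distr M borel Y) = UNIV"
    and "x1 \<in> X" "x2 \<in> X" "x1 \<noteq> x2" "independent {x1, x2}"
    and risk: "riskregion M Y \<beta> X \<subseteq> R" and "x \<noteq> 0" "z' < q"
  shows "0 < prob {w\<in>space M. Y w \<in> R \<and> z' < loss x (Y w) \<and> loss x (Y w) < q}"
proof -
  obtain x' where "x' \<in> X" "x' \<notin> span {x}"
    using independent_pair_not_in_span_singleton[OF assms(9,8)] assms(6,7) by blast
  obtain q' where q': "VaR M Y \<beta> x' = ereal q'" using VaR_eq_ereal[OF assms(1,3,4)] .
  have half_space: "{y. q' < loss x' y} \<subseteq> R"
    using risk mem_riskregion[OF \<open>x' \<in> X\<close> q'] by auto
  define U where "U = {y. z' < loss x y} \<inter> {y. loss x y < q} \<inter> {y. q' < loss x' y}"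
  have "open U"
    unfolding U_def by (intro open_Int open_Collect_less continuous_intros continuous_on_loss)
  moreover obtain y0 where "z' < loss x y0" "loss x y0 < q" "q' < loss x' y0"
    using exists_loss_between_and_loss_above[OF \<open>x \<noteq> 0\<close> \<open>x' \<notin> span {x}\<close> \<open>z' < q\<close>] by blast
  ultimately have "0 < emeasure (distr M borel Y) U"
    using support by (auto simp: support_of_def U_def)
  moreover have "emeasure (distr M borel Y) U = prob (Y -` U \<inter> space M)"
    using \<open>open U\<close> by (simp add: emeasure_distr emeasure_eq_measure)
  ultimately have "0 < prob (Y -` U \<inter> space M)" by simp
  also have "\<dots> \<le> prob {w\<in>space M. Y w \<in> R \<and> z' < loss x (Y w) \<and> loss x (Y w) < q}"
    using half_space by (intro finite_measure_mono) (auto simp: U_def)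
  finally show ?thesis .
qed

theorem (in prob_space) aggregation_condition_full_support:
  fixes Y :: "'a \<Rightarrow> 'b::euclidean_space"
  assumes [measurable]: "Y \<in> borel_measurable M" "R \<in> sets borel"
    and "0 < \<beta>" "\<beta> < 1" and support: "support_of (distr M borel Y) = UNIV"
    and "x1 \<in> X" "x2 \<in> X" "x1 \<noteq> x2" "independent {x1, x2}"
    and risk: "riskregion M Y \<beta> X \<subseteq> R"
  shows "aggregation_condition M Y \<beta> X R"
  unfolding aggregation_condition_def
proof (intro conjI risk ballI allI impI)
  fix x z' assume "x \<in> X" and z': "ereal z' < VaR M Y \<beta> x"
  obtain q where q: "VaR M Y \<beta> x = ereal q" using VaR_eq_ereal[OF assms(1,3,4)] .
  let ?A = "{w\<in>space M. Y w \<in> {y. ereal z' < ereal (loss x y) \<and> ereal (loss x y) \<le> VaR M Y \<beta> x} \<inter> R}"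
  show "0 < prob ?A"
  proof (cases "x = 0")
    case True
    \<comment> \<open>the zero portfolio has VaR 0, so its risk region is everything\<close>
    have "y \<in> R" for y
      using risk mem_riskregion[OF \<open>x \<in> X\<close>, of M Y \<beta> 0 y] VaR_zero[OF assms(1,3,4)] True
      by (auto simp: zero_ereal_def)
    then have "?A = space M" using z' True VaR_zero[OF assms(1,3,4)] by auto
    then show ?thesis by (simp add: prob_space)
  next
    case False
    have "0 < prob {w\<in>space M. Y w \<in> R \<and> z' < loss x (Y w) \<and> loss x (Y w) < q}"
      using z' q by (intro prob_riskregion_slice_pos[OF assms False]) simp
    also have "\<dots> \<le> prob ?A" using q by (intro finite_measure_mono) auto
    finally show ?thesis .
  qed
qed

section \<open>Empirical laws and sample counts\<close>

lemma prob_space_emp_law: "0 < m \<Longrightarrow> prob_space (emp_law g m)"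
  unfolding emp_law_def by (intro prob_space.prob_space_distr prob_space_measure_pmf) auto

lemma sets_emp_law [simp]: "sets (emp_law g m) = sets borel"
  by (simp add: emp_law_def)

lemma measure_emp_law_atMost:
  assumes "0 < m"
  shows "measure (emp_law g m) {..z} = card {i\<in>{..<m}. g i \<le> z} / m"
proof -
  have "measure (emp_law g m) {..z} = measure (measure_pmf (pmf_of_set {..<m})) (g -` {..z})"
    unfolding emp_law_def by (subst measure_distr) auto
  also have "\<dots> = card ({..<m} \<inter> g -` {..z}) / card {..<m}"
    using assms by (intro measure_pmf_of_set) auto
  also have "{..<m} \<inter> g -` {..z} = {i\<in>{..<m}. g i \<le> z}" by auto
  finally show ?thesis by simp
qed

lemma quantile_emp_law_eq:
  fixes g1 g2 :: "nat \<Rightarrow> real" and \<beta> u :: real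
  assumes "0 < m"
    and differ: "\<And>i. i < m \<Longrightarrow> g1 i \<noteq> g2 i \<Longrightarrow> g1 i \<le> c \<and> g2 i \<le> c"
    and few: "card {i\<in>{..<m}. g1 i \<le> c} < \<beta> * m" and "\<beta> \<le> u"
  shows "quantile (emp_law g1 m) u = quantile (emp_law g2 m) u"
proof -
  have below: "card {i\<in>{..<m}. g1 i \<le> z} / m < u \<and> card {i\<in>{..<m}. g2 i \<le> z} / m < u"
    if "z < c" for z
  proof -
    have "{i\<in>{..<m}. g1 i \<le> z} \<subseteq> {i\<in>{..<m}. g1 i \<le> c}"
      "{i\<in>{..<m}. g2 i \<le> z} \<subseteq> {i\<in>{..<m}. g1 i \<le> c}"
      using differ \<open>z < c\<close> by force+
    then have "card {i\<in>{..<m}. g1 i \<le> z} \<le> card {i\<in>{..<m}. g1 i \<le> c}"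
      "card {i\<in>{..<m}. g2 i \<le> z} \<le> card {i\<in>{..<m}. g1 i \<le> c}"
      by (auto intro: card_mono)
    moreover have "\<beta> * m \<le> u * m" using \<open>\<beta> \<le> u\<close> by (simp add: mult_right_mono)
    ultimately have "card {i\<in>{..<m}. g1 i \<le> z} < u * m" "card {i\<in>{..<m}. g2 i \<le> z} < u * m"
      using few by linarith+
    then show ?thesis using \<open>0 < m\<close> by (simp add: divide_less_eq)
  qed
  have above: "{i\<in>{..<m}. g1 i \<le> z} = {i\<in>{..<m}. g2 i \<le> z}" if "c \<le> z" for z
    using differ that by force
  have "u \<le> measure (emp_law g1 m) {..z} \<longleftrightarrow> u \<le> measure (emp_law g2 m) {..z}" for z
    using below[of z] above[of z] \<open>0 < m\<close> by (cases "c \<le> z") (auto simp: measure_emp_law_atMost)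
  then show ?thesis by (simp add: quantile_def)
qed

lemma tail_risk_measure_emp_law_eq:
  fixes g1 g2 :: "nat \<Rightarrow> real" and \<beta> :: real
  assumes "tail_risk_measure \<beta> \<rho>" "0 < m"
    and "\<And>i. i < m \<Longrightarrow> g1 i \<noteq> g2 i \<Longrightarrow> g1 i \<le> c \<and> g2 i \<le> c"
    and "card {i\<in>{..<m}. g1 i \<le> c} < \<beta> * m"
  shows "\<rho> (emp_law g1 m) = \<rho> (emp_law g2 m)"
  using assms(1) unfolding tail_risk_measure_def
  by (elim allE impE) (auto simp: prob_space_emp_law[OF assms(2)] intro!: quantile_emp_law_eq[OF assms(2-4)])

lemma card_filter_lessThan_split:
  fixes m :: nat
  shows "card {i\<in>{..<m}. P i} + card {i\<in>{..<m}. \<not> P i} = m"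
proof -
  have "card ({i\<in>{..<m}. P i} \<union> {i\<in>{..<m}. \<not> P i}) = card {i\<in>{..<m}. P i} + card {i\<in>{..<m}. \<not> P i}"
    by (rule card_Un_disjoint) auto
  moreover have "{i\<in>{..<m}. P i} \<union> {i\<in>{..<m}. \<not> P i} = {..<m}" by auto
  ultimately show ?thesis by simp
qed

lemma sum_indicator_comp_card:
  fixes m :: nat
  shows "(\<Sum>i<m. indicator A (Z i) :: real) = card {i\<in>{..<m}. Z i \<in> A}"
proof -
  have "(\<Sum>i<m. indicator A (Z i) :: real) = (\<Sum>i<m. of_bool (Z i \<in> A))"
    by (simp add: indicator_def)
  also have "\<dots> = card ({..<m} \<inter> {i. Z i \<in> A})" by (rule sum_of_bool_eq) simp_all
  also have "{..<m} \<inter> {i. Z i \<in> A} = {i\<in>{..<m}. Z i \<in> A}" by auto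
  finally show ?thesis .
qed

lemma nat_seq_unit_steps_attains:
  fixes c :: "nat \<Rightarrow> nat"
  assumes "c 0 = 0" "\<And>k. c (Suc k) \<le> c k + 1" "\<exists>m. n \<le> c m"
  shows "\<exists>m. c m = n"
proof -
  define m0 where "m0 = (LEAST m. n \<le> c m)"
  have "n \<le> c m0" unfolding m0_def using assms(3) by (rule LeastI_ex)
  show ?thesis
  proof (cases m0)
    case 0
    then show ?thesis using \<open>n \<le> c m0\<close> assms(1) by auto
  next
    case (Suc k)
    then have "\<not> n \<le> c k" unfolding m0_def by (metis Suc_n_not_le_n Least_le)
    then show ?thesis using assms(2)[of k] \<open>n \<le> c m0\<close> Suc by (intro exI[of _ m0]) simp
  qed
qed

lemma Nsamp_properties:
  assumes "\<And>n. \<exists>m. n \<le> card {i\<in>{..<m}. Ys i w \<in> R}"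
  shows "card {i\<in>{..<Nsamp R Ys w n}. Ys i w \<in> R} = n" "n \<le> Nsamp R Ys w n"
    "card {i\<in>{..<Nsamp R Ys w n}. Ys i w \<notin> R} = Nsamp R Ys w n - n"
proof -
  have "card {i\<in>{..<Suc k}. Ys i w \<in> R} \<le> card {i\<in>{..<k}. Ys i w \<in> R} + 1" for k
  proof -
    have "{i\<in>{..<Suc k}. Ys i w \<in> R} \<subseteq> insert k {i\<in>{..<k}. Ys i w \<in> R}" by auto
    then have "card {i\<in>{..<Suc k}. Ys i w \<in> R} \<le> card (insert k {i\<in>{..<k}. Ys i w \<in> R})"
      by (intro card_mono) auto
    then show ?thesis by (simp add: card_insert_if split: if_splits)
  qed
  then have "\<exists>m. card {i\<in>{..<m}. Ys i w \<in> R} = n"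
    by (intro nat_seq_unit_steps_attains[where c="\<lambda>m. card {i\<in>{..<m}. Ys i w \<in> R}"] assms) simp
  then show card_in: "card {i\<in>{..<Nsamp R Ys w n}. Ys i w \<in> R} = n"
    unfolding Nsamp_def by (rule LeastI_ex)
  show "n \<le> Nsamp R Ys w n"
    using card_mono[of "{..<Nsamp R Ys w n}" "{i\<in>{..<Nsamp R Ys w n}. Ys i w \<in> R}"] card_in by auto
  show "card {i\<in>{..<Nsamp R Ys w n}. Ys i w \<notin> R} = Nsamp R Ys w n - n"
    using card_filter_lessThan_split[where P="\<lambda>i. Ys i w \<in> R" and m="Nsamp R Ys w n"] card_in by simp
qed

section \<open>Consistency of aggregation sampling\<close>

lemma (in finite_measure) integral_mult_indicator_less:
  fixes f :: "'a \<Rightarrow> real"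
  assumes [measurable]: "S \<in> sets M" and "0 < measure M S" "integrable M f" "\<And>w. w \<in> S \<Longrightarrow> f w < q"
  shows "integral\<^sup>L M (\<lambda>w. f w * indicator S w) < q * measure M S"
proof -
  define g where "g = (\<lambda>w. (q - f w) * indicator S w)"
  have "integrable M g"
    unfolding g_def using assms(3) by (intro integrable_real_mult_indicator) auto
  have "AE w in M. 0 \<le> g w" using assms(4) by (auto simp: g_def indicator_def less_imp_le)
  have "integral\<^sup>L M g \<noteq> 0"
  proof
    assume "integral\<^sup>L M g = 0"
    then have "AE w in M. g w = 0"
      using integral_nonneg_eq_0_iff_AE[OF \<open>integrable M g\<close> \<open>AE w in M. 0 \<le> g w\<close>] by simp
    then have "AE w in M. w \<notin> S" by (rule AE_mp) (auto intro!: AE_I2 dest: assms(4) simp: g_def)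
    then have "emeasure M S = 0"
      using AE_iff_measurable[OF assms(1), of "\<lambda>w. w \<notin> S"] sets.sets_into_space[OF assms(1)] by auto
    then show False using assms(2) by (simp add: emeasure_eq_measure)
  qed
  then have "0 < integral\<^sup>L M g"
    using integral_nonneg_AE[OF \<open>AE w in M. 0 \<le> g w\<close>] by linarith
  moreover have "integral\<^sup>L M g = integral\<^sup>L M (\<lambda>w. q * indicator S w) - integral\<^sup>L M (\<lambda>w. f w * indicator S w)"
    unfolding g_def left_diff_distrib using assms(3)
    by (intro Bochner_Integration.integral_diff integrable_real_mult_indicator) auto
  moreover have "integral\<^sup>L M (\<lambda>w. q * indicator S w) = q * measure M S" by simp
  ultimately show ?thesis by simp
qed

lemma (in finite_measure) measure_incseq_exceeds:
  assumes "range B \<subseteq> sets M" "incseq B" "t < measure M (\<Union>n. B n)"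
  obtains n where "t < measure M (B n)"
  using order_tendstoD(1)[OF finite_Lim_measure_incseq[OF assms(1,2)] assms(3)]
  by (auto simp: eventually_sequentially)

lemma loss_gap_near:
  assumes "loss x0 e + 2 * \<eta> < loss x0 y" "norm y < K"
    and "norm (x - x0) < \<eta> / (\<bar>K\<bar> + norm e + 1)"
  shows "loss x e + \<eta> < loss x y"
proof -
  have "0 < \<bar>K\<bar> + norm e + 1" by (simp add: add_nonneg_pos)
  have "\<bar>(x - x0) \<bullet> (y - e)\<bar> \<le> norm (x - x0) * norm (y - e)" by (rule Cauchy_Schwarz_ineq2)
  also have "\<dots> \<le> norm (x - x0) * (\<bar>K\<bar> + norm e + 1)"
    using norm_triangle_ineq4[of y e] \<open>norm y < K\<close> by (intro mult_left_mono) auto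
  also have "\<dots> < \<eta>"
    using assms(3) \<open>0 < \<bar>K\<bar> + norm e + 1\<close> by (simp add: pos_less_divide_eq)
  finally have "\<bar>(x - x0) \<bullet> (y - e)\<bar> < \<eta>" .
  moreover have "loss x y - loss x e = (loss x0 y - loss x0 e) - (x - x0) \<bullet> (y - e)"
    by (simp add: loss_def inner_diff_left inner_diff_right)
  ultimately show ?thesis using assms(1) by linarith
qed

locale aggregation_sampling = prob_space M for M :: "'w measure" +
  fixes Y :: "'w \<Rightarrow> 'a::euclidean_space" and X :: "'a set" and \<beta> :: real and R :: "'a set"
    and x1 x2 :: 'a and Ys :: "nat \<Rightarrow> 'w \<Rightarrow> 'a"
  assumes measurable_Y[measurable]: "Y \<in> borel_measurable M"
    and sets_R[measurable]: "R \<in> sets borel"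
    and beta: "0 < \<beta>" "\<beta> < 1"
    and support: "support_of (distr M borel Y) = UNIV"
    and x1_x2: "x1 \<in> X" "x2 \<in> X" "x1 \<noteq> x2" "independent {x1, x2}"
    and riskregion_subset: "riskregion M Y \<beta> X \<subseteq> R"
    and integrable_Y: "integrable M Y"
    and prob_outside: "0 < prob {w\<in>space M. Y w \<notin> R}" "prob {w\<in>space M. Y w \<notin> R} < 1"
    and indep: "indep_vars (\<lambda>_. borel) Ys UNIV"
    and distr_Ys: "\<And>i. distr M borel (Ys i) = distr M borel Y"
    and compact_X: "compact X"
begin

definition outside :: "'w set" where
  "outside = {w\<in>space M. Y w \<notin> R}"

definition out_mean :: 'a where
  "out_mean = (1 / prob outside) *\<^sub>R set_lebesgue_integral M outside Y"

lemma sets_outside[measurable]: "outside \<in> sets M"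
  unfolding outside_def by measurable

lemma psi_eq: "psi M Y R y = (if y \<in> R then y else out_mean)"
  by (simp add: psi_def out_mean_def outside_def)

lemma mem_R_if_VaR_le_loss: "x \<in> X \<Longrightarrow> VaR M Y \<beta> x = ereal q \<Longrightarrow> q \<le> loss x y \<Longrightarrow> y \<in> R"
  using mem_riskregion riskregion_subset by blast

lemma loss_out_mean_less_VaR:
  assumes "x \<in> X" "VaR M Y \<beta> x = ereal q"
  shows "loss x out_mean < q"
proof -
  have "integrable M (\<lambda>w. loss x (Y w))"
    using integrable_Y by (simp add: loss_def)
  moreover have "loss x (Y w) < q" if "w \<in> outside" for w
    using that mem_R_if_VaR_le_loss[OF assms, of "Y w"] by (force simp: outside_def)
  ultimately have "integral\<^sup>L M (\<lambda>w. loss x (Y w) * indicator outside w) < q * prob outside"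
    using prob_outside(1) by (intro integral_mult_indicator_less) (auto simp: outside_def)
  moreover have "integral\<^sup>L M (\<lambda>w. loss x (Y w) * indicator outside w)
      = - (x \<bullet> set_lebesgue_integral M outside Y)"
  proof -
    have "integrable M (\<lambda>w. indicator outside w *\<^sub>R Y w)"
      by (simp add: integrable_mult_indicator integrable_Y)
    then have "x \<bullet> set_lebesgue_integral M outside Y = integral\<^sup>L M (\<lambda>w. x \<bullet> (indicator outside w *\<^sub>R Y w))"
      unfolding set_lebesgue_integral_def by (simp add: integral_inner_right[symmetric] del: integral_inner_right)
    also have "\<dots> = - integral\<^sup>L M (\<lambda>w. loss x (Y w) * indicator outside w)"
      by (simp add: loss_def mult.commute)
    finally show ?thesis by simp
  qed
  ultimately have "- (x \<bullet> set_lebesgue_integral M outside Y) < q * prob outside" by simp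
  moreover have "- (a / p) < q" if "- a < q * p" "0 < p" for a p :: real
    using that by (simp add: field_simps)
  ultimately show ?thesis using prob_outside(1) by (simp add: loss_def out_mean_def outside_def)
qed

lemma zero_notin_X: "0 \<notin> X"
proof
  assume "0 \<in> X"
  then have "y \<in> R" for y
    using mem_R_if_VaR_le_loss[of 0 0 y] VaR_zero[OF measurable_Y beta] by (simp add: zero_ereal_def)
  then show False using prob_outside(1) by simp
qed

lemma prob_R_loss_gt_out_mean:
  assumes "x \<in> X"
  shows "1 - \<beta> < prob {w\<in>space M. Y w \<in> R \<and> loss x out_mean < loss x (Y w)}"
proof -
  obtain q where q: "VaR M Y \<beta> x = ereal q" "prob {w\<in>space M. loss x (Y w) < q} \<le> \<beta>"
    using VaR_eq_ereal[OF measurable_Y beta] by metis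
  have "loss x out_mean < q" by (rule loss_out_mean_less_VaR[OF assms q(1)])
  define A1 where "A1 = {w\<in>space M. q \<le> loss x (Y w)}"
  define A2 where "A2 = {w\<in>space M. Y w \<in> R \<and> loss x out_mean < loss x (Y w) \<and> loss x (Y w) < q}"
  have [measurable]: "A1 \<in> sets M" "A2 \<in> sets M" unfolding A1_def A2_def by measurable
  have "A1 = space M - {w\<in>space M. loss x (Y w) < q}" by (auto simp: A1_def)
  then have "1 - \<beta> \<le> prob A1" using q(2) by (simp add: prob_compl)
  moreover have "0 < prob A2"
    unfolding A2_def using zero_notin_X assms \<open>loss x out_mean < q\<close>
    by (intro prob_riskregion_slice_pos[OF measurable_Y sets_R beta support x1_x2 riskregion_subset]) auto
  moreover have "prob (A1 \<union> A2) = prob A1 + prob A2"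
    by (rule finite_measure_Union) (auto simp: A1_def A2_def)
  moreover have "prob (A1 \<union> A2) \<le> prob {w\<in>space M. Y w \<in> R \<and> loss x out_mean < loss x (Y w)}"
    using mem_R_if_VaR_le_loss[OF assms q(1)] \<open>loss x out_mean < q\<close>
    by (intro finite_measure_mono) (auto simp: A1_def A2_def)
  ultimately show ?thesis by linarith
qed

definition margin_set :: "'a \<Rightarrow> real \<Rightarrow> real \<Rightarrow> 'a set" where
  "margin_set x \<eta> K = {y\<in>R. loss x out_mean + 2 * \<eta> < loss x y \<and> norm y < K}"

lemma sets_margin_set[measurable]: "margin_set x \<eta> K \<in> sets borel"
  unfolding margin_set_def by measurable

lemma exists_margin_set:
  assumes "x \<in> X"
  obtains \<eta> K where "0 < \<eta>" "1 - \<beta> < prob {w\<in>space M. Y w \<in> margin_set x \<eta> K}"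
proof -
  define B where "B n = {w\<in>space M. Y w \<in> margin_set x (1 / (2 * real (Suc n))) n}" for n
  have B_eq: "B n = {w\<in>space M. Y w \<in> R \<and> loss x out_mean + 1 / Suc n < loss x (Y w) \<and> norm (Y w) < n}"
    for n
  proof -
    have "2 * (1 / (2 * real (Suc n))) = 1 / Suc n" by (simp del: of_nat_Suc)
    then show ?thesis by (simp add: B_def margin_set_def del: of_nat_Suc)
  qed
  have sets_B: "range B \<subseteq> sets M" unfolding B_def by (auto intro: measurable_sets_Collect)
  have "incseq B" using B_eq
    by (intro incseq_SucI) (auto simp: frac_le elim!: le_less_trans[rotated])
  have B_union: "(\<Union>n. B n) = {w\<in>space M. Y w \<in> R \<and> loss x out_mean < loss x (Y w)}"
  proof (intro set_eqI iffI)
    fix w assume w: "w \<in> {w\<in>space M. Y w \<in> R \<and> loss x out_mean < loss x (Y w)}"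
    obtain n1 :: nat where "1 / Suc n1 < loss x (Y w) - loss x out_mean"
      using w reals_Archimedean by (metis diff_gt_0_iff_gt inverse_eq_divide mem_Collect_eq of_nat_Suc)
    moreover obtain n2 :: nat where "norm (Y w) < n2" using reals_Archimedean2 by blast
    moreover have "1 / Suc (max n1 n2) \<le> 1 / Suc n1" by (simp add: frac_le)
    ultimately show "w \<in> (\<Union>n. B n)"
      using w B_eq by (intro UN_I[of "max n1 n2"]) auto
  qed (use B_eq in \<open>auto intro: less_trans[rotated] simp: add_strict_increasing2\<close>)
  then have "1 - \<beta> < prob (\<Union>n. B n)" using prob_R_loss_gt_out_mean[OF assms] by simp
  then obtain n where "1 - \<beta> < prob (B n)" by (rule measure_incseq_exceeds[OF sets_B \<open>incseq B\<close>])
  then show ?thesis by (intro that[of "1 / (2 * real (Suc n))" n]) (auto simp: B_def)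
qed

lemma AE_sample_average_tendsto:
  assumes [measurable]: "h \<in> borel_measurable borel" and "integrable M (\<lambda>w. h (Y w))"
  shows "AE w in M. (\<lambda>m. (\<Sum>i<m. h (Ys i w)) / m) \<longlonglongrightarrow> expectation (\<lambda>w. h (Y w))"
  using assms by (intro strong_law_of_large_numbers_comp[OF indep distr_Ys]) auto

lemma AE_frequency_tendsto:
  assumes "A \<in> sets borel"
  shows "AE w in M. (\<lambda>m. card {i\<in>{..<m}. Ys i w \<in> A} / m) \<longlonglongrightarrow> prob {w\<in>space M. Y w \<in> A}"
proof -
  have [measurable]: "{w\<in>space M. Y w \<in> A} \<in> sets M" using assms by measurable
  have "expectation (\<lambda>w. indicator A (Y w)) = expectation (indicator {w\<in>space M. Y w \<in> A})"
    by (intro Bochner_Integration.integral_cong) (auto simp: indicator_def)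
  also have "\<dots> = prob {w\<in>space M. Y w \<in> A}" by simp
  finally have "expectation (\<lambda>w. indicator A (Y w)) = prob {w\<in>space M. Y w \<in> A}" .
  then show ?thesis
    using AE_sample_average_tendsto[of "indicator A"] assms
    by (simp add: sum_indicator_comp_card integrable_indicator_comp[OF measurable_Y])
qed

lemma Nsamp_tendsto_infinity:
  assumes freq_out: "(\<lambda>m. card {i\<in>{..<m}. Ys i w \<notin> R} / m) \<longlonglongrightarrow> prob outside"
  shows "\<And>n. \<exists>m. n \<le> card {i\<in>{..<m}. Ys i w \<in> R}" "filterlim (Nsamp R Ys w) at_top sequentially"
proof -
  have "(\<lambda>m. 1 - card {i\<in>{..<m}. Ys i w \<notin> R} / m) \<longlonglongrightarrow> 1 - prob outside"
    by (intro tendsto_intros freq_out)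
  moreover have "\<forall>\<^sub>F m in sequentially. 1 - card {i\<in>{..<m}. Ys i w \<notin> R} / m = card {i\<in>{..<m}. Ys i w \<in> R} / m"
    using card_filter_lessThan_split[of m "\<lambda>i. Ys i w \<in> R" for m]
    by (intro eventually_sequentiallyI[of 1]) (simp add: field_simps flip: of_nat_add)
  ultimately have "(\<lambda>m. card {i\<in>{..<m}. Ys i w \<in> R} / m) \<longlonglongrightarrow> 1 - prob outside"
    by (rule Lim_transform_eventually)
  moreover have "0 < 1 - prob outside" using prob_outside(2) by (simp add: outside_def)
  ultimately have "filterlim (\<lambda>m. card {i\<in>{..<m}. Ys i w \<in> R} / m * m) at_top sequentially"
    by (intro filterlim_tendsto_pos_mult_at_top filterlim_real_sequentially)
  then have "filterlim (\<lambda>m. real (card {i\<in>{..<m}. Ys i w \<in> R})) at_top sequentially"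
    by (rule filterlim_at_top_mono) (auto intro: eventually_sequentiallyI[of 1])
  then show unbounded: "\<exists>m. n \<le> card {i\<in>{..<m}. Ys i w \<in> R}" for n
    by (auto simp: filterlim_at_top eventually_sequentially dest!: spec[of _ "real n"])
       (meson order_refl)
  show "filterlim (Nsamp R Ys w) at_top sequentially"
    using Nsamp_properties(2)[of Ys w R, OF unbounded]
    by (intro filterlim_at_top_mono[OF filterlim_ident]) auto
qed

lemma ybar_tendsto:
  assumes freq_out: "(\<lambda>m. card {i\<in>{..<m}. Ys i w \<notin> R} / m) \<longlonglongrightarrow> prob outside"
    and means_out: "\<And>b. b \<in> Basis \<Longrightarrow>
      (\<lambda>m. (\<Sum>i<m. indicator (- R) (Ys i w) * (Ys i w \<bullet> b)) / m) \<longlonglongrightarrow> set_lebesgue_integral M outside Y \<bullet> b"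
  shows "(\<lambda>n. ybar R Ys w n) \<longlonglongrightarrow> out_mean"
proof (rule tendsto_componentwise_iff[THEN iffD2, rule_format])
  fix b :: 'a assume "b \<in> Basis"
  define a where "a m = (\<Sum>i<m. indicator (- R) (Ys i w) * (Ys i w \<bullet> b))" for m
  define c :: "nat \<Rightarrow> real" where "c m = card {i\<in>{..<m}. Ys i w \<notin> R}" for m
  have "(\<lambda>m. a m / c m) \<longlonglongrightarrow> (set_lebesgue_integral M outside Y \<bullet> b) / prob outside"
    using means_out[OF \<open>b \<in> Basis\<close>] freq_out prob_outside(1)
    by (intro LIMSEQ_ratio_of_averages) (auto simp: a_def c_def outside_def)
  then have "(\<lambda>n. a (Nsamp R Ys w n) / c (Nsamp R Ys w n)) \<longlonglongrightarrow> out_mean \<bullet> b"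
    by (intro filterlim_compose[OF _ Nsamp_tendsto_infinity(2)[OF freq_out]]) (simp add: out_mean_def)
  moreover have "ybar R Ys w n \<bullet> b = a (Nsamp R Ys w n) / c (Nsamp R Ys w n)" for n
  proof -
    have "a m = (\<Sum>i\<in>{i\<in>{..<m}. Ys i w \<notin> R}. Ys i w \<bullet> b)" for m
      by (simp add: a_def indicator_def Int_def)
    moreover have "c (Nsamp R Ys w n) = Nsamp R Ys w n - n"
      using Nsamp_properties(3)[of Ys w R, OF Nsamp_tendsto_infinity(1)[OF freq_out]] by (simp add: c_def)
    ultimately show ?thesis by (simp add: ybar_def inner_sum_left)
  qed
  ultimately show "(\<lambda>n. ybar R Ys w n \<bullet> b) \<longlonglongrightarrow> out_mean \<bullet> b" by simp
qed

lemma rho_hat_eq_rho_tilde_if_many_above: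
  assumes "tail_risk_measure \<beta> \<rho>"
    and many: "(1 - \<beta>) * Nsamp R Ys w n < card {i\<in>{..<Nsamp R Ys w n}.
      Ys i w \<in> R \<and> max (loss x (ybar R Ys w n)) (loss x out_mean) < loss x (Ys i w)}"
  shows "rho_hat \<rho> R Ys w n x = rho_tilde \<rho> M Y R Ys w (Nsamp R Ys w n) x"
proof -
  define m where "m = Nsamp R Ys w n"
  define c where "c = max (loss x (ybar R Ys w n)) (loss x out_mean)"
  define g1 where "g1 i = (if Ys i w \<in> R then loss x (Ys i w) else loss x (ybar R Ys w n))" for i
  define g2 where "g2 i = loss x (psi M Y R (Ys i w))" for i
  \<comment> \<open>the two empirical laws only differ at values not above c, and fewer than a
    fraction beta of the values lie there, so their upper beta-tails coincide\<close>
  have "g1 i \<le> c \<and> g2 i \<le> c" if "g1 i \<noteq> g2 i" for i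
    using that by (auto simp: g1_def g2_def psi_eq c_def split: if_splits)
  moreover have "card {i\<in>{..<m}. g1 i \<le> c} < \<beta> * m"
  proof -
    have "{i\<in>{..<m}. Ys i w \<in> R \<and> c < loss x (Ys i w)} \<subseteq> {i\<in>{..<m}. \<not> g1 i \<le> c}"
      by (auto simp: g1_def)
    then have "real (card {i\<in>{..<m}. Ys i w \<in> R \<and> c < loss x (Ys i w)}) \<le> card {i\<in>{..<m}. \<not> g1 i \<le> c}"
      by (intro of_nat_mono card_mono) auto
    moreover have "real (card {i\<in>{..<m}. g1 i \<le> c}) + card {i\<in>{..<m}. \<not> g1 i \<le> c} = m"
      using card_filter_lessThan_split by (metis of_nat_add)
    moreover have "(1 - \<beta>) * m < card {i\<in>{..<m}. Ys i w \<in> R \<and> c < loss x (Ys i w)}"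
      using many by (simp add: m_def c_def)
    ultimately show ?thesis by (simp add: algebra_simps)
  qed
  moreover have "0 < m" using many by (auto simp: m_def[symmetric] intro: Nat.gr0I)
  ultimately have "\<rho> (emp_law g1 m) = \<rho> (emp_law g2 m)"
    by (intro tail_risk_measure_emp_law_eq[OF assms(1)]) auto
  then show ?thesis by (simp add: rho_hat_def rho_tilde_def m_def g1_def[abs_def] g2_def[abs_def])
qed

lemma rho_hat_eq_rho_tilde_near_margin:
  assumes "tail_risk_measure \<beta> \<rho>"
    and near: "norm (x - x0) < \<eta> / (\<bar>K\<bar> + norm out_mean + 1)"
    and close: "(\<bar>B\<bar> + 1) * norm (ybar R Ys w n - out_mean) < \<eta>" and "norm x \<le> B"
    and many: "(1 - \<beta>) * Nsamp R Ys w n < card {i\<in>{..<Nsamp R Ys w n}. Ys i w \<in> margin_set x0 \<eta> K}"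
  shows "rho_hat \<rho> R Ys w n x = rho_tilde \<rho> M Y R Ys w (Nsamp R Ys w n) x"
proof -
  let ?N = "Nsamp R Ys w n" and ?c = "max (loss x (ybar R Ys w n)) (loss x out_mean)"
  have "loss x (ybar R Ys w n) - loss x out_mean \<le> norm x * norm (ybar R Ys w n - out_mean)"
    using Cauchy_Schwarz_ineq2[of x "ybar R Ys w n - out_mean"] by (simp add: loss_def inner_diff_right)
  also have "\<dots> \<le> (\<bar>B\<bar> + 1) * norm (ybar R Ys w n - out_mean)"
    using \<open>norm x \<le> B\<close> by (intro mult_right_mono) auto
  finally have "loss x (ybar R Ys w n) < loss x out_mean + \<eta>" using close by linarith
  moreover have "0 \<le> (\<bar>B\<bar> + 1) * norm (ybar R Ys w n - out_mean)" by simp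
  then have "0 < \<eta>" using close by linarith
  ultimately have "?c < loss x out_mean + \<eta>" by simp
  then have "{i\<in>{..<?N}. Ys i w \<in> margin_set x0 \<eta> K} \<subseteq> {i\<in>{..<?N}. Ys i w \<in> R \<and> ?c < loss x (Ys i w)}"
    using loss_gap_near[OF _ _ near] by (force simp: margin_set_def)
  then have "card {i\<in>{..<?N}. Ys i w \<in> margin_set x0 \<eta> K} \<le> card {i\<in>{..<?N}. Ys i w \<in> R \<and> ?c < loss x (Ys i w)}"
    by (intro card_mono) auto
  with many show ?thesis
    by (intro rho_hat_eq_rho_tilde_if_many_above[OF assms(1)]) linarith
qed

lemma eventually_Nsamp_gt:
  assumes freq_out: "(\<lambda>m. card {i\<in>{..<m}. Ys i w \<notin> R} / m) \<longlonglongrightarrow> prob outside"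
  shows "\<forall>\<^sub>F n in sequentially. n < Nsamp R Ys w n"
proof -
  have "\<forall>\<^sub>F m in sequentially. 0 < card {i\<in>{..<m}. Ys i w \<notin> R} / m"
    using freq_out prob_outside(1) by (intro order_tendstoD(1)) (auto simp: outside_def)
  then have "\<forall>\<^sub>F n in sequentially. 0 < card {i\<in>{..<Nsamp R Ys w n}. Ys i w \<notin> R}"
    by (rule eventually_compose_filterlim[OF _ Nsamp_tendsto_infinity(2)[OF freq_out], THEN eventually_mono])
      (auto intro: Nat.gr0I)
  then show ?thesis
    using Nsamp_properties(3)[of Ys w R, OF Nsamp_tendsto_infinity(1)[OF freq_out]]
    by (auto elim: eventually_mono)
qed

lemma eventually_rho_hat_eq_rho_tilde:
  fixes \<eta> K p :: "'a \<Rightarrow> real"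
  assumes "tail_risk_measure \<beta> \<rho>"
    and freq_out: "(\<lambda>m. card {i\<in>{..<m}. Ys i w \<notin> R} / m) \<longlonglongrightarrow> prob outside"
    and means_out: "\<And>b. b \<in> Basis \<Longrightarrow>
      (\<lambda>m. (\<Sum>i<m. indicator (- R) (Ys i w) * (Ys i w \<bullet> b)) / m) \<longlonglongrightarrow> set_lebesgue_integral M outside Y \<bullet> b"
    and freq_margin: "\<And>x0. x0 \<in> F \<Longrightarrow>
      (\<lambda>m. card {i\<in>{..<m}. Ys i w \<in> margin_set x0 (\<eta> x0) (K x0)} / m) \<longlonglongrightarrow> p x0"
    and "finite F" "\<And>x0. x0 \<in> F \<Longrightarrow> 1 - \<beta> < p x0" "\<And>x0. x0 \<in> F \<Longrightarrow> 0 < \<eta> x0"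
    and cover: "X \<subseteq> (\<Union>x0\<in>F. ball x0 (\<eta> x0 / (\<bar>K x0\<bar> + norm out_mean + 1)))"
    and bound: "\<And>x. x \<in> X \<Longrightarrow> norm x \<le> B"
  shows "\<forall>\<^sub>F n in sequentially. n < Nsamp R Ys w n \<and>
    (\<forall>x\<in>X. rho_hat \<rho> R Ys w n x = rho_tilde \<rho> M Y R Ys w (Nsamp R Ys w n) x)"
proof -
  let ?N = "Nsamp R Ys w"
  have "(\<lambda>n. norm (ybar R Ys w n - out_mean)) \<longlonglongrightarrow> 0"
    using ybar_tendsto[OF freq_out means_out] by (simp add: tendsto_norm_zero_iff LIM_zero)
  then have "\<forall>\<^sub>F n in sequentially. \<forall>x0\<in>F. norm (ybar R Ys w n - out_mean) < \<eta> x0 / (\<bar>B\<bar> + 1)"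
    using \<open>finite F\<close> assms(7) by (intro eventually_ball_finite ballI order_tendstoD(2)) auto
  then have close: "\<forall>\<^sub>F n in sequentially. \<forall>x0\<in>F. (\<bar>B\<bar> + 1) * norm (ybar R Ys w n - out_mean) < \<eta> x0"
    by (rule eventually_mono) (simp add: pos_less_divide_eq mult.commute add_nonneg_pos)
  have "\<forall>\<^sub>F m in sequentially. \<forall>x0\<in>F. 1 - \<beta> < card {i\<in>{..<m}. Ys i w \<in> margin_set x0 (\<eta> x0) (K x0)} / m"
    using \<open>finite F\<close> assms(6) by (intro eventually_ball_finite ballI order_tendstoD(1)[OF freq_margin]) auto
  then have "\<forall>\<^sub>F n in sequentially. \<forall>x0\<in>F.
      1 - \<beta> < card {i\<in>{..<?N n}. Ys i w \<in> margin_set x0 (\<eta> x0) (K x0)} / ?N n"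
    by (rule eventually_compose_filterlim[OF _ Nsamp_tendsto_infinity(2)[OF freq_out]])
  with eventually_Nsamp_gt[OF freq_out] have many: "\<forall>\<^sub>F n in sequentially. \<forall>x0\<in>F.
      (1 - \<beta>) * ?N n < card {i\<in>{..<?N n}. Ys i w \<in> margin_set x0 (\<eta> x0) (K x0)}"
    by eventually_elim (simp add: less_divide_eq)
  show ?thesis
    using eventually_Nsamp_gt[OF freq_out] close many
  proof eventually_elim
    case (elim n)
    have "rho_hat \<rho> R Ys w n x = rho_tilde \<rho> M Y R Ys w (?N n) x" if "x \<in> X" for x
    proof -
      obtain x0 where "x0 \<in> F" "norm (x - x0) < \<eta> x0 / (\<bar>K x0\<bar> + norm out_mean + 1)"
        using cover \<open>x \<in> X\<close> by (auto simp: dist_norm norm_minus_commute)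
      then show ?thesis
        using elim(2,3) bound[OF \<open>x \<in> X\<close>] by (intro rho_hat_eq_rho_tilde_near_margin[OF assms(1)]) auto
    qed
    then show ?case using elim(1) by blast
  qed
qed

lemma exists_finite_margin_cover:
  obtains \<eta> K :: "'a \<Rightarrow> real" and F where "F \<subseteq> X" "finite F"
    "\<And>x0. x0 \<in> X \<Longrightarrow> 0 < \<eta> x0"
    "\<And>x0. x0 \<in> X \<Longrightarrow> 1 - \<beta> < prob {w\<in>space M. Y w \<in> margin_set x0 (\<eta> x0) (K x0)}"
    "X \<subseteq> (\<Union>x0\<in>F. ball x0 (\<eta> x0 / (\<bar>K x0\<bar> + norm out_mean + 1)))"
proof -
  have "\<forall>x0\<in>X. \<exists>\<eta> K. 0 < \<eta> \<and> 1 - \<beta> < prob {w\<in>space M. Y w \<in> margin_set x0 \<eta> K}"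
    using exists_margin_set by blast
  then obtain \<eta> where "\<forall>x0\<in>X. \<exists>K. 0 < \<eta> x0 \<and> 1 - \<beta> < prob {w\<in>space M. Y w \<in> margin_set x0 (\<eta> x0) K}"
    by (metis bchoice)
  then obtain K where \<eta>K: "\<forall>x0\<in>X. 0 < \<eta> x0 \<and> 1 - \<beta> < prob {w\<in>space M. Y w \<in> margin_set x0 (\<eta> x0) (K x0)}"
    by (metis bchoice)
  obtain F where F: "F \<subseteq> X" "finite F" "X \<subseteq> (\<Union>x0\<in>F. ball x0 (\<eta> x0 / (\<bar>K x0\<bar> + norm out_mean + 1)))"
  proof (rule compactE_image[OF compact_X])
    show "X \<subseteq> (\<Union>x0\<in>X. ball x0 (\<eta> x0 / (\<bar>K x0\<bar> + norm out_mean + 1)))"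
      using \<eta>K by (force simp: add_nonneg_pos)
  qed auto
  then show ?thesis using \<eta>K by (intro that[of F \<eta> K]) auto
qed

lemma AE_out_average_tendsto:
  "AE w in M. \<forall>b\<in>Basis.
    (\<lambda>m. (\<Sum>i<m. indicator (- R) (Ys i w) * (Ys i w \<bullet> b)) / m) \<longlonglongrightarrow> set_lebesgue_integral M outside Y \<bullet> b"
proof (rule AE_finite_allI[OF finite_Basis])
  fix b :: 'a
  have eq: "indicator (- R) (Y w) * (Y w \<bullet> b) = (indicator outside w *\<^sub>R Y w) \<bullet> b" if "w \<in> space M" for w
    using that by (auto simp: outside_def indicator_def)
  have int: "integrable M (\<lambda>w. indicator outside w *\<^sub>R Y w)"
    by (intro integrable_mult_indicator sets_outside integrable_Y)
  then have "integrable M (\<lambda>w. indicator (- R) (Y w) * (Y w \<bullet> b))"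
    by (intro Bochner_Integration.integrable_cong[OF refl eq, THEN iffD2] integrable_inner_left)
  moreover have "expectation (\<lambda>w. indicator (- R) (Y w) * (Y w \<bullet> b)) = set_lebesgue_integral M outside Y \<bullet> b"
    using int by (simp add: Bochner_Integration.integral_cong[OF refl eq] set_lebesgue_integral_def
        integral_inner_left[symmetric] del: integral_inner_left)
  ultimately show "AE w in M. (\<lambda>m. (\<Sum>i<m. indicator (- R) (Ys i w) * (Ys i w \<bullet> b)) / m)
      \<longlonglongrightarrow> set_lebesgue_integral M outside Y \<bullet> b"
    using AE_sample_average_tendsto[of "\<lambda>y. indicator (- R) y * (y \<bullet> b)"] by simp
qed

theorem AE_eventually_rho_hat_eq_rho_tilde:
  assumes "tail_risk_measure \<beta> \<rho>"
  shows "AE w in M. \<forall>\<^sub>F n in sequentially. n < Nsamp R Ys w n \<and>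
    (\<forall>x\<in>X. rho_hat \<rho> R Ys w n x = rho_tilde \<rho> M Y R Ys w (Nsamp R Ys w n) x)"
proof -
  obtain B where B: "\<And>x. x \<in> X \<Longrightarrow> norm x \<le> B"
    using compact_imp_bounded[OF compact_X] by (auto simp: bounded_iff)
  obtain F \<eta> K where "F \<subseteq> X" "finite F" "\<And>x0. x0 \<in> X \<Longrightarrow> 0 < \<eta> x0"
    "\<And>x0. x0 \<in> X \<Longrightarrow> 1 - \<beta> < prob {w\<in>space M. Y w \<in> margin_set x0 (\<eta> x0) (K x0)}"
    and cover: "X \<subseteq> (\<Union>x0\<in>F. ball x0 (\<eta> x0 / (\<bar>K x0\<bar> + norm out_mean + 1)))"
    by (rule exists_finite_margin_cover) blast
  have "AE w in M. \<forall>x0\<in>F. (\<lambda>m. card {i\<in>{..<m}. Ys i w \<in> margin_set x0 (\<eta> x0) (K x0)} / m)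
      \<longlonglongrightarrow> prob {w\<in>space M. Y w \<in> margin_set x0 (\<eta> x0) (K x0)}"
    by (rule AE_finite_allI[OF \<open>finite F\<close>]) (rule AE_frequency_tendsto[OF sets_margin_set])
  moreover have "AE w in M. (\<lambda>m. card {i\<in>{..<m}. Ys i w \<notin> R} / m) \<longlonglongrightarrow> prob outside"
    using AE_frequency_tendsto[of "- R"] by (simp add: outside_def)
  ultimately show ?thesis
    using AE_out_average_tendsto
  proof eventually_elim
    case (elim w)
    then show ?case
      using \<open>F \<subseteq> X\<close> \<open>\<And>x0. x0 \<in> X \<Longrightarrow> 0 < \<eta> x0\<close> \<open>\<And>x0. x0 \<in> X \<Longrightarrow> 1 - \<beta> < prob _\<close>
      by (intro eventually_rho_hat_eq_rho_tilde[OF assms elim(2) elim(3)[rule_format] elim(1)[rule_format]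
          \<open>finite F\<close> _ _ cover B]) auto
  qed
qed

end

theorem mainTheorem11:
  fixes M :: "'w measure" and Y :: "'w \<Rightarrow> 'a::euclidean_space"
    and X :: "'a set" and \<beta> :: real and R :: "'a set" and x1 x2 :: 'a
  assumes "prob_space M"
    and "Y \<in> borel_measurable M"
    and "0 < \<beta>" and "\<beta> < 1"
    and "support_of (distr M borel Y) = UNIV"
    and "x1 \<in> X" and "x2 \<in> X" and "x1 \<noteq> x2" and "independent {x1, x2}"
    and "riskregion M Y \<beta> X \<subseteq> R" and "R \<in> sets borel"
  shows "aggregation_condition M Y \<beta> X R \<and>
    (\<forall>(Ys :: nat \<Rightarrow> 'w \<Rightarrow> 'a) (\<rho> :: real measure \<Rightarrow> ereal).
       absolutely_continuous lborel (distr M borel Y) \<and> compact X \<and>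
       integrable M Y \<and>
       0 < measure M {w\<in>space M. Y w \<notin> R} \<and> measure M {w\<in>space M. Y w \<notin> R} < 1 \<and>
       prob_space.indep_vars M (\<lambda>_. borel) Ys UNIV \<and> (\<forall>i. distr M borel (Ys i) = distr M borel Y) \<and>
       tail_risk_measure \<beta> \<rho>
     \<longrightarrow> (AE w in M. eventually (\<lambda>n. Nsamp R Ys w n > n \<and>
            (\<forall>x\<in>X. rho_hat \<rho> R Ys w n x = rho_tilde \<rho> M Y R Ys w (Nsamp R Ys w n) x))
          sequentially))"
proof -
  interpret prob_space M by fact
  have "aggregation_condition M Y \<beta> X R"
    using assms by (intro aggregation_condition_full_support) auto
  moreover have "AE w in M. \<forall>\<^sub>F n in sequentially. n < Nsamp R Ys w n \<and>
      (\<forall>x\<in>X. rho_hat \<rho> R Ys w n x = rho_tilde \<rho> M Y R Ys w (Nsamp R Ys w n) x)"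
    if "compact X" "integrable M Y" "0 < prob {w\<in>space M. Y w \<notin> R}" "prob {w\<in>space M. Y w \<notin> R} < 1"
      "indep_vars (\<lambda>_. borel) Ys UNIV" "\<forall>i. distr M borel (Ys i) = distr M borel Y"
      "tail_risk_measure \<beta> \<rho>"
    for Ys :: "nat \<Rightarrow> 'w \<Rightarrow> 'a" and \<rho>
  proof -
    interpret aggregation_sampling M Y X \<beta> R x1 x2 Ys
      using assms that by unfold_locales auto
    show ?thesis by (rule AE_eventually_rho_hat_eq_rho_tilde[OF \<open>tail_risk_measure \<beta> \<rho>\<close>])
  qed
  ultimately show ?thesis by blast
qed

end
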